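(* Let $0\le r\le n$ and $0\le s\le\min(r,n-r)$, and let $\lambda$ be the kernel of $\Lambda_s^{r,s}$ (so $\lambda$ is a function on $\{0,1,\dots,s\}$). Then for $0\le k\le s$, $$\lambda(k)=(-1)^k\frac{(r-s+1)_k}{[n-r]_k}\,\lambda(0).$$
   Context: Let $\Omega$ be a finite set with $|\Omega|=n\ge1$, $G=S(\Omega)$, $X=\mathcal P(\Omega)$, $X_r=\{x\in X:|x|=r\}$, with $G$ acting on $L^2(X)$ (complex functions on $X$; $L^2(X_r)$ = functions supported on $X_r$) by $(\rho(g)\psi)(x)=\psi(g^{-1}x)$. For $0\le s\le\min(r,n-r)$, $L^2(X_r)_s$ denotes the unique irreducible $G$-subspace of $L^2(X_r)$ isomorphic to the irreducible representation of $G$ associated with the partition $(n-s,s)$ ($L^2(X_r)$ is multiplicity free and contains exactly these). For $0\le r_1,r_2\le n$, $0\le s\le\min(r_1,n-r_1,r_2,n-r_2)$, $\Lambda_s^{r_1,r_2}$ is a nonzero $G$-equivariant map $L^2(X)\to L^2(X)$ sending $L^2(X_{r_1})_s$ into $L^2(X_{r_2})_s$ and vanishing on its orthogonal complement. Its kernel is the function $\lambda$ on integers $k$ with $\max(0,r_2-r_1)\le k\le\min(n-r_1,r_2)$ such that $(\Lambda_s^{r_1,r_2}\psi)(x_2)=\sum_{x_1\in X_{r_1}}\lambda(|x_2\setminus x_1|)\psi(x_1)$ for $\psi\in L^2(X_{r_1})$, $x_2\in X_{r_2}$. Notation: $[\alpha]_k=\alpha(\alpha-1)\cdots(\alpha-k+1)$,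 $(\alpha)_k=\alpha(\alpha+1)\cdots(\alpha+k-1)$, with $[\alpha]_0=(\alpha)_0=1$. *)

theory Defs
  imports Complex_Main "HOL-Combinatorics.Permutations"
begin

type_synonym 'a fn = "'a set \<Rightarrow> complex"

text \<open>Falling factorial [a]_k = a(a-1)...(a-k+1); rising factorial is the library pochhammer.\<close>
definition falling :: "complex \<Rightarrow> nat \<Rightarrow> complex" where
  "falling a k = (\<Prod>i<k. a - of_nat i)"

text \<open>L^2(X): complex functions on X = Pow Omega (zero outside X).\<close>
definition L2 :: "'a set \<Rightarrow> 'a fn set" where
  "L2 \<Omega> = {\<psi>. \<forall>x. \<psi> x \<noteq> 0 \<longrightarrow> x \<subseteq> \<Omega>}"

definition L2r :: "'a set \<Rightarrow> nat \<Rightarrow> 'a fn set" where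
  "L2r \<Omega> r = {\<psi>. \<forall>x. \<psi> x \<noteq> 0 \<longrightarrow> x \<subseteq> \<Omega> \<and> card x = r}"

definition inner_L2 :: "'a set \<Rightarrow> 'a fn \<Rightarrow> 'a fn \<Rightarrow> complex" where
  "inner_L2 \<Omega> \<phi> \<psi> = (\<Sum>x\<in>Pow \<Omega>. \<phi> x * cnj (\<psi> x))"

definition Sym :: "'a set \<Rightarrow> ('a \<Rightarrow> 'a) set" where
  "Sym \<Omega> = {g. g permutes \<Omega>}"

definition rho :: "('a \<Rightarrow> 'a) \<Rightarrow> 'a fn \<Rightarrow> 'a fn" where
  "rho g \<psi> = (\<lambda>x. \<psi> (inv g ` x))"

definition subspace_fn :: "'a fn set \<Rightarrow> bool" where
  "subspace_fn V \<longleftrightarrow> (\<lambda>x. 0) \<in> V \<and> (\<forall>v\<in>V. \<forall>w\<in>V. (\<lambda>x. v x + w x) \<in> V)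
      \<and> (\<forall>c::complex. \<forall>v\<in>V. (\<lambda>x. c * v x) \<in> V)"

definition invariant :: "'a set \<Rightarrow> 'a fn set \<Rightarrow> bool" where
  "invariant \<Omega> V \<longleftrightarrow> (\<forall>g\<in>Sym \<Omega>. \<forall>v\<in>V. rho g v \<in> V)"

definition irreducible_sub :: "'a set \<Rightarrow> 'a fn set \<Rightarrow> bool" where
  "irreducible_sub \<Omega> V \<longleftrightarrow> subspace_fn V \<and> invariant \<Omega> V \<and> V \<noteq> {\<lambda>x. 0}
     \<and> (\<forall>W. subspace_fn W \<and> invariant \<Omega> W \<and> W \<subseteq> V \<longrightarrow> W = {\<lambda>x. 0} \<or> W = V)"

definition rep_iso :: "'a set \<Rightarrow> 'a fn set \<Rightarrow> 'a fn set \<Rightarrow> bool" where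
  "rep_iso \<Omega> V W \<longleftrightarrow> (\<exists>f. bij_betw f V W
      \<and> (\<forall>v\<in>V. \<forall>w\<in>V. f (\<lambda>x. v x + w x) = (\<lambda>x. f v x + f w x))
      \<and> (\<forall>c::complex. \<forall>v\<in>V. f (\<lambda>x. c * v x) = (\<lambda>x. c * f v x))
      \<and> (\<forall>g\<in>Sym \<Omega>. \<forall>v\<in>V. f (rho g v) = rho g (f v)))"

text \<open>Specht module of the two-row partition (n-s,s), realised inside the permutation
  module of tabloids; a tabloid of shape (n-s,s) is identified with its second row, an
  s-subset of Omega.  A tableau is given by its s columns (a!i over b!i), with all entries
  distinct; the remaining n-2s entries of the first row do not affect the polytabloid.
  The polytabloid e_t = sum over column permutations sigma of sgn(sigma) {sigma t}; swapping
  the columns in J gives second row {b!i | i notin J} union {a!i | i in J}, sign (-1)^|J|.\<close>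
definition tableaux2 :: "'a set \<Rightarrow> nat \<Rightarrow> ('a list \<times> 'a list) set" where
  "tableaux2 \<Omega> s = {(a, b). length a = s \<and> length b = s \<and> distinct (a @ b) \<and> set (a @ b) \<subseteq> \<Omega>}"

definition polytabloid :: "nat \<Rightarrow> 'a list \<Rightarrow> 'a list \<Rightarrow> 'a fn" where
  "polytabloid s a b = (\<lambda>x. \<Sum>J\<in>Pow {..<s}.
      if x = {b ! i | i. i < s \<and> i \<notin> J} \<union> {a ! i | i. i \<in> J} then (-1) ^ card J else 0)"

definition specht2 :: "'a set \<Rightarrow> nat \<Rightarrow> 'a fn set" where
  "specht2 \<Omega> s = {\<lambda>x. \<Sum>t\<in>tableaux2 \<Omega> s. c t * polytabloid s (fst t) (snd t) x | c. True}"

definition L2comp :: "'a set \<Rightarrow> nat \<Rightarrow> nat \<Rightarrow> 'a fn set" where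
  "L2comp \<Omega> r s = (THE V. V \<subseteq> L2r \<Omega> r \<and> irreducible_sub \<Omega> V \<and> rep_iso \<Omega> V (specht2 \<Omega> s))"

definition is_Lambda :: "'a set \<Rightarrow> nat \<Rightarrow> nat \<Rightarrow> nat \<Rightarrow> ('a fn \<Rightarrow> 'a fn) \<Rightarrow> bool" where
  "is_Lambda \<Omega> s r1 r2 \<Lambda> \<longleftrightarrow>
     (\<forall>\<psi>\<in>L2 \<Omega>. \<Lambda> \<psi> \<in> L2 \<Omega>)
     \<and> (\<forall>\<phi>\<in>L2 \<Omega>. \<forall>\<psi>\<in>L2 \<Omega>. \<Lambda> (\<lambda>x. \<phi> x + \<psi> x) = (\<lambda>x. \<Lambda> \<phi> x + \<Lambda> \<psi> x))
     \<and> (\<forall>c::complex. \<forall>\<psi>\<in>L2 \<Omega>. \<Lambda> (\<lambda>x. c * \<psi> x) = (\<lambda>x. c * \<Lambda> \<psi> x))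
     \<and> (\<forall>g\<in>Sym \<Omega>. \<forall>\<psi>\<in>L2 \<Omega>. \<Lambda> (rho g \<psi>) = rho g (\<Lambda> \<psi>))
     \<and> (\<exists>\<psi>\<in>L2 \<Omega>. \<Lambda> \<psi> \<noteq> (\<lambda>x. 0))
     \<and> \<Lambda> ` L2comp \<Omega> r1 s \<subseteq> L2comp \<Omega> r2 s
     \<and> (\<forall>\<psi>\<in>L2 \<Omega>. (\<forall>\<phi>\<in>L2comp \<Omega> r1 s. inner_L2 \<Omega> \<psi> \<phi> = 0) \<longrightarrow> \<Lambda> \<psi> = (\<lambda>x. 0))"

definition is_kernel :: "'a set \<Rightarrow> nat \<Rightarrow> nat \<Rightarrow> ('a fn \<Rightarrow> 'a fn) \<Rightarrow> (nat \<Rightarrow> complex) \<Rightarrow> bool" where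
  "is_kernel \<Omega> r1 r2 \<Lambda> lam \<longleftrightarrow>
     (\<forall>\<psi>\<in>L2r \<Omega> r1. \<forall>x2. x2 \<subseteq> \<Omega> \<and> card x2 = r2 \<longrightarrow>
        \<Lambda> \<psi> x2 = (\<Sum>x1\<in>{x. x \<subseteq> \<Omega> \<and> card x = r1}. lam (card (x2 - x1)) * \<psi> x1))"

end

(*
  The kernel of a map into L2(X_s)_s is read off from one combinatorial property of the Specht
  module S^(n-s,s), realised in L2(X_s) as the span of the polytabloids e_t: every h in it is
  harmonic, i.e. for each (s-1)-set y the sum of h over the s-sets containing y vanishes (the
  terms cancel in pairs under a column swap of t fixing y).  Apply this to h = Lambda delta,
  where delta is the indicator of an r-set x1, so that h(x2) = lambda(|x2 - x1|): choosing y with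
  j points outside x1, the s-sets y + {z} have j or j+1 points outside x1, according as z lies
  in x1 (r-s+1+j choices) or not (n-r-j choices), whence
    (r-s+1+j) lambda(j) + (n-r-j) lambda(j+1) = 0,
  which telescopes to the formula.
  That Lambda delta lies in S^(n-s,s) requires identifying L2(X_r)_s: it is the image of the
  Specht module under the up map (sum over s-subsets), as the Specht module is irreducible and,
  by a Schur-type argument, an equivariant image of e_t in L2(X_r) is determined up to a scalar
  by its behaviour under the column swaps and the stabiliser of the entries of t.  Lambda then
  factors through the orthogonal projection onto this finite-dimensional space.
*)
theory Submission
  imports Defs
begin

section \<open>Invariant subspaces and equivariant linear maps\<close>

definition span_fn :: "'i set \<Rightarrow> ('i \<Rightarrow> 'a fn) \<Rightarrow> 'a fn set" where
  "span_fn I v = {\<lambda>x. \<Sum>i\<in>I. c i * v i x | c. True}"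

definition linear_on :: "'a fn set \<Rightarrow> ('a fn \<Rightarrow> 'b fn) \<Rightarrow> bool" where
  "linear_on V f \<longleftrightarrow> (\<forall>v\<in>V. \<forall>w\<in>V. f (\<lambda>x. v x + w x) = (\<lambda>x. f v x + f w x))
      \<and> (\<forall>c::complex. \<forall>v\<in>V. f (\<lambda>x. c * v x) = (\<lambda>x. c * f v x))"

definition equivariant_on :: "'a set \<Rightarrow> 'a fn set \<Rightarrow> ('a fn \<Rightarrow> 'a fn) \<Rightarrow> bool" where
  "equivariant_on \<Omega> V f \<longleftrightarrow> (\<forall>g\<in>Sym \<Omega>. \<forall>v\<in>V. f (rho g v) = rho g (f v))"

lemma subspace_fnD:
  assumes "subspace_fn V"
  shows subspace_fn_zero: "(\<lambda>x. 0) \<in> V"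
    and subspace_fn_add: "v \<in> V \<Longrightarrow> w \<in> V \<Longrightarrow> (\<lambda>x. v x + w x) \<in> V"
    and subspace_fn_scale: "v \<in> V \<Longrightarrow> (\<lambda>x. c * v x) \<in> V"
  using assms unfolding subspace_fn_def by blast+

lemma subspace_fnI:
  assumes "(\<lambda>x. 0) \<in> V" "\<And>v w. v \<in> V \<Longrightarrow> w \<in> V \<Longrightarrow> (\<lambda>x. v x + w x) \<in> V"
    "\<And>c v. v \<in> V \<Longrightarrow> (\<lambda>x. c * v x) \<in> V"
  shows "subspace_fn V"
  using assms unfolding subspace_fn_def by blast

lemma linear_onD:
  assumes "linear_on V f"
  shows linear_on_add: "v \<in> V \<Longrightarrow> w \<in> V \<Longrightarrow> f (\<lambda>x. v x + w x) = (\<lambda>x. f v x + f w x)"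
    and linear_on_scale: "v \<in> V \<Longrightarrow> f (\<lambda>x. c * v x) = (\<lambda>x. c * f v x)"
  using assms unfolding linear_on_def by blast+

lemma linear_on_zero:
  assumes "linear_on V f" "subspace_fn V"
  shows "f (\<lambda>x. 0) = (\<lambda>x. 0)"
  using linear_on_scale[OF assms(1) subspace_fn_zero[OF assms(2)], of 0] by simp

lemma invariantD: "invariant \<Omega> V \<Longrightarrow> g \<in> Sym \<Omega> \<Longrightarrow> v \<in> V \<Longrightarrow> rho g v \<in> V"
  unfolding invariant_def by blast

lemma equivariant_onD: "equivariant_on \<Omega> V f \<Longrightarrow> g \<in> Sym \<Omega> \<Longrightarrow> v \<in> V \<Longrightarrow> f (rho g v) = rho g (f v)"
  unfolding equivariant_on_def by blast

lemma irreducible_subD: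
  assumes "irreducible_sub \<Omega> V"
  shows irreducible_sub_subspace: "subspace_fn V"
    and irreducible_sub_invariant: "invariant \<Omega> V"
    and irreducible_sub_nontrivial: "V \<noteq> {\<lambda>x. 0}"
    and irreducible_sub_minimal:
      "subspace_fn W \<Longrightarrow> invariant \<Omega> W \<Longrightarrow> W \<subseteq> V \<Longrightarrow> W = {\<lambda>x. 0} \<or> W = V"
  using assms unfolding irreducible_sub_def by blast+

lemma irreducible_subI:
  assumes "subspace_fn V" "invariant \<Omega> V" "V \<noteq> {\<lambda>x. 0}"
    "\<And>W. subspace_fn W \<Longrightarrow> invariant \<Omega> W \<Longrightarrow> W \<subseteq> V \<Longrightarrow> W = {\<lambda>x. 0} \<or> W = V"
  shows "irreducible_sub \<Omega> V"
  unfolding irreducible_sub_def using assms by blast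

lemma rep_iso_iff:
  "rep_iso \<Omega> V W \<longleftrightarrow> (\<exists>f. bij_betw f V W \<and> linear_on V f \<and> equivariant_on \<Omega> V f)"
  unfolding rep_iso_def linear_on_def equivariant_on_def by blast

lemma rho_zero: "rho g (\<lambda>x. 0) = (\<lambda>x. 0)"
  unfolding rho_def by simp

lemma subspace_fn_sum:
  assumes "subspace_fn V" "\<And>i. i \<in> F \<Longrightarrow> w i \<in> V"
  shows "(\<lambda>x. \<Sum>i\<in>F. c i * w i x) \<in> V"
proof (cases "finite F")
  case True
  then show ?thesis
    using assms(2)
  proof (induction F rule: finite_induct)
    case (insert j F)
    then show ?case
      using subspace_fn_add[OF assms(1) subspace_fn_scale[OF assms(1)]] by simp
  qed (simp add: subspace_fn_zero[OF assms(1)])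
qed (simp add: subspace_fn_zero[OF assms(1)])

lemma subspace_fn_span_fn: "subspace_fn (span_fn I v)"
proof (rule subspace_fnI)
  show "(\<lambda>x. 0) \<in> span_fn I v"
    unfolding span_fn_def by (intro CollectI exI[of _ "\<lambda>_. 0"]) simp
next
  fix p q assume "p \<in> span_fn I v" "q \<in> span_fn I v"
  then obtain c1 c2 where "p = (\<lambda>x. \<Sum>i\<in>I. c1 i * v i x)" "q = (\<lambda>x. \<Sum>i\<in>I. c2 i * v i x)"
    unfolding span_fn_def by auto
  then show "(\<lambda>x. p x + q x) \<in> span_fn I v"
    unfolding span_fn_def
    by (intro CollectI exI[of _ "\<lambda>i. c1 i + c2 i"]) (simp add: sum.distrib distrib_right)
next
  fix d p assume "p \<in> span_fn I v"
  then obtain c where "p = (\<lambda>x. \<Sum>i\<in>I. c i * v i x)"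
    unfolding span_fn_def by auto
  then show "(\<lambda>x. d * p x) \<in> span_fn I v"
    unfolding span_fn_def
    by (intro CollectI exI[of _ "\<lambda>i. d * c i"]) (simp add: sum_distrib_left mult.assoc)
qed

lemma span_fn_mem:
  assumes "finite I" "j \<in> I"
  shows "v j \<in> span_fn I v"
proof -
  have "(\<Sum>i\<in>I. (if i = j then 1 else 0) * v i x) = v j x" for x
    using assms by (simp add: sum.delta if_distrib[of "\<lambda>c. c * _"] cong: if_cong)
  then show ?thesis
    unfolding span_fn_def by (intro CollectI exI[of _ "\<lambda>i. if i = j then 1 else 0"]) auto
qed

lemma span_fn_subset:
  "subspace_fn V \<Longrightarrow> (\<And>i. i \<in> I \<Longrightarrow> v i \<in> V) \<Longrightarrow> span_fn I v \<subseteq> V"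
  unfolding span_fn_def using subspace_fn_sum by blast

lemma linear_on_sum:
  assumes "linear_on V f" "subspace_fn V" "finite F" "\<And>i. i \<in> F \<Longrightarrow> w i \<in> V"
  shows "f (\<lambda>x. \<Sum>i\<in>F. c i * w i x) = (\<lambda>x. \<Sum>i\<in>F. c i * f (w i) x)"
  using assms(3,4)
proof (induction F rule: finite_induct)
  case empty
  then show ?case using linear_on_zero[OF assms(1,2)] by simp
next
  case (insert j F)
  have "f (\<lambda>x. \<Sum>i\<in>insert j F. c i * w i x) = f (\<lambda>x. c j * w j x + (\<Sum>i\<in>F. c i * w i x))"
    using insert by simp
  also have "\<dots> = (\<lambda>x. f (\<lambda>x. c j * w j x) x + f (\<lambda>x. \<Sum>i\<in>F. c i * w i x) x)"
    using insert.prems assms(2)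
    by (intro linear_on_add[OF assms(1)] subspace_fn_scale subspace_fn_sum) auto
  also have "\<dots> = (\<lambda>x. c j * f (w j) x + (\<Sum>i\<in>F. c i * f (w i) x))"
    using insert by (simp add: linear_on_scale[OF assms(1)])
  finally show ?case
    using insert by simp
qed

lemma subspace_fn_image:
  assumes "subspace_fn V" "linear_on V f"
  shows "subspace_fn (f ` V)"
proof (rule subspace_fnI)
  show "(\<lambda>x. 0) \<in> f ` V"
    using linear_on_zero[OF assms(2,1)] subspace_fn_zero[OF assms(1)] by force
next
  fix v w assume "v \<in> f ` V" "w \<in> f ` V"
  then obtain p q where pq: "p \<in> V" "q \<in> V" and "v = f p" "w = f q" by blast
  then have "(\<lambda>x. v x + w x) = f (\<lambda>x. p x + q x)"
    by (simp add: linear_on_add[OF assms(2)])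
  then show "(\<lambda>x. v x + w x) \<in> f ` V"
    using subspace_fn_add[OF assms(1) pq] by simp
next
  fix c v assume "v \<in> f ` V"
  then obtain p where p: "p \<in> V" and "v = f p" by blast
  then have "(\<lambda>x. c * v x) = f (\<lambda>x. c * p x)"
    by (simp add: linear_on_scale[OF assms(2)])
  then show "(\<lambda>x. c * v x) \<in> f ` V"
    using subspace_fn_scale[OF assms(1) p] by simp
qed

lemma invariant_image:
  assumes "invariant \<Omega> V" "equivariant_on \<Omega> V f"
  shows "invariant \<Omega> (f ` V)"
  unfolding invariant_def
proof (intro ballI)
  fix g v assume g: "g \<in> Sym \<Omega>" and "v \<in> f ` V"
  then obtain p where p: "p \<in> V" and "v = f p" by blast
  then have "rho g v = f (rho g p)"
    by (simp add: equivariant_onD[OF assms(2) g])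
  then show "rho g v \<in> f ` V"
    using invariantD[OF assms(1) g p] by simp
qed

lemma subspace_fn_preimage:
  assumes "subspace_fn V" "linear_on V f" "subspace_fn W"
  shows "subspace_fn {v \<in> V. f v \<in> W}"
proof (rule subspace_fnI)
  show "(\<lambda>x. 0) \<in> {v \<in> V. f v \<in> W}"
    using assms by (simp add: subspace_fn_zero linear_on_zero)
  show "(\<lambda>x. v x + w x) \<in> {v \<in> V. f v \<in> W}"
    if "v \<in> {v \<in> V. f v \<in> W}" "w \<in> {v \<in> V. f v \<in> W}" for v w
    using that assms by (simp add: subspace_fn_add linear_on_add)
  show "(\<lambda>x. c * v x) \<in> {v \<in> V. f v \<in> W}" if "v \<in> {v \<in> V. f v \<in> W}" for c v
    using that assms by (simp add: subspace_fn_scale linear_on_scale)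
qed

lemma invariant_preimage:
  assumes "invariant \<Omega> V" "equivariant_on \<Omega> V f" "invariant \<Omega> W"
  shows "invariant \<Omega> {v \<in> V. f v \<in> W}"
  using assms unfolding invariant_def equivariant_on_def by simp

lemma subspace_fn_zero_space: "subspace_fn {\<lambda>x. 0}"
  by (rule subspace_fnI) simp_all

lemma invariant_zero_space: "invariant \<Omega> {\<lambda>x. 0}"
  unfolding invariant_def by (simp add: rho_zero)

lemma inj_on_irreducible:
  assumes V: "irreducible_sub \<Omega> V" and f: "linear_on V f" "equivariant_on \<Omega> V f"
    and nonzero: "\<exists>v\<in>V. f v \<noteq> (\<lambda>x. 0)"
  shows "inj_on f V"
proof (rule inj_onI)
  note sV = irreducible_sub_subspace[OF V]
  define K where "K = {v \<in> V. f v \<in> {\<lambda>x. 0}}"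
  have "K = {\<lambda>x. 0} \<or> K = V"
    unfolding K_def
    by (rule irreducible_sub_minimal[OF V subspace_fn_preimage[OF sV f(1) subspace_fn_zero_space]
        invariant_preimage[OF irreducible_sub_invariant[OF V] f(2) invariant_zero_space]]) auto
  moreover have "K \<noteq> V"
    using nonzero unfolding K_def by auto
  ultimately have K: "K = {\<lambda>x. 0}"
    by simp
  fix p q assume p: "p \<in> V" and q: "q \<in> V" and eq: "f p = f q"
  define d where "d = (\<lambda>x. p x + (-1) * q x)"
  have "d \<in> V"
    unfolding d_def by (rule subspace_fn_add[OF sV p subspace_fn_scale[OF sV q]])
  moreover have "f d = (\<lambda>x. f p x + (-1) * f q x)"
    unfolding d_def linear_on_add[OF f(1) p subspace_fn_scale[OF sV q]] linear_on_scale[OF f(1) q] ..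
  ultimately have "d \<in> K"
    unfolding K_def using eq by simp
  then have "p x + (-1) * q x = 0" for x
    using K unfolding d_def by (simp add: fun_eq_iff)
  then show "p = q"
    by (intro ext) (simp add: add_eq_0_iff2)
qed

lemma irreducible_sub_image:
  assumes V: "irreducible_sub \<Omega> V" and f: "linear_on V f" "equivariant_on \<Omega> V f"
    and inj: "inj_on f V"
  shows "irreducible_sub \<Omega> (f ` V)"
proof -
  note sV = irreducible_sub_subspace[OF V] and iV = irreducible_sub_invariant[OF V]
  have f0: "f (\<lambda>x. 0) = (\<lambda>x. 0)"
    by (rule linear_on_zero[OF f(1) sV])
  have "\<not> V \<subseteq> {\<lambda>x. 0}"
    using irreducible_sub_nontrivial[OF V] subspace_fn_zero[OF sV] by blast
  then obtain v where v: "v \<in> V" "v \<noteq> (\<lambda>x. 0)"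
    by blast
  have "f v \<noteq> f (\<lambda>x. 0)"
    by (rule inj_on_contraD[OF inj v(2) v(1) subspace_fn_zero[OF sV]])
  then have "f v \<notin> {\<lambda>x. 0}"
    unfolding f0 by simp
  then have nontrivial: "f ` V \<noteq> {\<lambda>x. 0}"
    using imageI[OF v(1), of f] by blast
  have minimal: "W = {\<lambda>x. 0} \<or> W = f ` V"
    if W: "subspace_fn W" "invariant \<Omega> W" "W \<subseteq> f ` V" for W
  proof -
    have "W = f ` {v \<in> V. f v \<in> W}"
      using W(3) by blast
    moreover have "{v \<in> V. f v \<in> W} = {\<lambda>x. 0} \<or> {v \<in> V. f v \<in> W} = V"
      by (rule irreducible_sub_minimal[OF V subspace_fn_preimage[OF sV f(1) W(1)]
          invariant_preimage[OF iV f(2) W(2)]]) auto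
    ultimately show ?thesis
      using f0 by auto
  qed
  show ?thesis
    by (rule irreducible_subI[OF subspace_fn_image[OF sV f(1)] invariant_image[OF iV f(2)]
          nontrivial minimal])
qed

lemma the_inv_into_linear_equivariant:
  assumes sV: "subspace_fn V" and iV: "invariant \<Omega> V"
    and f: "linear_on V f" "equivariant_on \<Omega> V f" and inj: "inj_on f V"
  shows "linear_on (f ` V) (the_inv_into V f)" "equivariant_on \<Omega> (f ` V) (the_inv_into V f)"
proof -
  have inv: "the_inv_into V f (f v) = v" if "v \<in> V" for v
    using the_inv_into_f_f[OF inj that] .
  have "the_inv_into V f (\<lambda>x. f p x + f q x) = (\<lambda>x. p x + q x)" if "p \<in> V" "q \<in> V" for p q
    using inv[OF subspace_fn_add[OF sV that]] linear_on_add[OF f(1) that] by simp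
  moreover have "the_inv_into V f (\<lambda>x. c * f p x) = (\<lambda>x. c * p x)" if "p \<in> V" for c p
    using inv[OF subspace_fn_scale[OF sV that]] linear_on_scale[OF f(1) that] by simp
  ultimately show "linear_on (f ` V) (the_inv_into V f)"
    unfolding linear_on_def by (auto simp: inv)
  have "the_inv_into V f (rho g (f p)) = rho g p" if "g \<in> Sym \<Omega>" "p \<in> V" for g p
    using inv[OF invariantD[OF iV that]] equivariant_onD[OF f(2) that] by simp
  then show "equivariant_on \<Omega> (f ` V) (the_inv_into V f)"
    unfolding equivariant_on_def by (auto simp: inv)
qed

lemma rep_iso_image:
  assumes "subspace_fn V" "invariant \<Omega> V" "linear_on V f" "equivariant_on \<Omega> V f" "inj_on f V"
  shows "rep_iso \<Omega> (f ` V) V"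
  unfolding rep_iso_iff
  using bij_betw_the_inv_into[OF inj_on_imp_bij_betw[OF assms(5)]]
    the_inv_into_linear_equivariant[OF assms] by blast

lemma rep_iso_inverse:
  assumes "rep_iso \<Omega> V W" "subspace_fn V" "invariant \<Omega> V"
  obtains \<theta> where "bij_betw \<theta> W V" "linear_on W \<theta>" "equivariant_on \<Omega> W \<theta>"
proof -
  obtain f where f: "bij_betw f V W" "linear_on V f" "equivariant_on \<Omega> V f"
    using assms(1) unfolding rep_iso_iff by blast
  have "rep_iso \<Omega> (f ` V) V"
    by (rule rep_iso_image[OF assms(2,3) f(2,3) bij_betw_imp_inj_on[OF f(1)]])
  then obtain \<theta> where "bij_betw \<theta> (f ` V) V" "linear_on (f ` V) \<theta>" "equivariant_on \<Omega> (f ` V) \<theta>"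
    unfolding rep_iso_iff by blast
  moreover have "f ` V = W"
    using f(1) by (simp add: bij_betw_def)
  ultimately show ?thesis
    using that by simp
qed

lemma inner_L2_sum_right:
  "inner_L2 \<Omega> \<phi> (\<lambda>x. \<Sum>i\<in>I. c i * v i x) = (\<Sum>i\<in>I. cnj (c i) * inner_L2 \<Omega> \<phi> (v i))"
proof -
  have "inner_L2 \<Omega> \<phi> (\<lambda>x. \<Sum>i\<in>I. c i * v i x)
      = (\<Sum>y\<in>Pow \<Omega>. \<Sum>i\<in>I. cnj (c i) * (\<phi> y * cnj (v i y)))"
    unfolding inner_L2_def by (intro sum.cong refl) (simp add: sum_distrib_left mult_ac)
  also have "\<dots> = (\<Sum>i\<in>I. cnj (c i) * inner_L2 \<Omega> \<phi> (v i))"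
    unfolding inner_L2_def by (subst sum.swap) (simp add: sum_distrib_left)
  finally show ?thesis .
qed

lemma inner_L2_diff_left: "inner_L2 \<Omega> (\<lambda>x. f x - g x) h = inner_L2 \<Omega> f h - inner_L2 \<Omega> g h"
  unfolding inner_L2_def by (simp add: sum_subtractf left_diff_distrib)

lemma inner_L2_scale_left: "inner_L2 \<Omega> (\<lambda>x. c * f x) h = c * inner_L2 \<Omega> f h"
  unfolding inner_L2_def by (simp add: sum_distrib_left mult.assoc)

lemma inner_L2_add_right: "inner_L2 \<Omega> f (\<lambda>x. g x + h x) = inner_L2 \<Omega> f g + inner_L2 \<Omega> f h"
  unfolding inner_L2_def by (simp add: sum.distrib distrib_left)

lemma inner_L2_self_eq_0D:
  assumes "finite \<Omega>" "inner_L2 \<Omega> u u = 0" "y \<subseteq> \<Omega>"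
  shows "u y = 0"
proof -
  have "inner_L2 \<Omega> u u = complex_of_real (\<Sum>z\<in>Pow \<Omega>. (cmod (u z))\<^sup>2)"
    unfolding inner_L2_def of_real_sum by (intro sum.cong refl) (simp only: complex_norm_square)
  then have "complex_of_real (\<Sum>z\<in>Pow \<Omega>. (cmod (u z))\<^sup>2) = 0"
    by (simp only: assms(2))
  then have "(\<Sum>z\<in>Pow \<Omega>. (cmod (u z))\<^sup>2) = 0"
    by (simp only: of_real_eq_0_iff)
  then have "\<forall>z\<in>Pow \<Omega>. (cmod (u z))\<^sup>2 = 0"
    using assms(1) by (subst (asm) sum_nonneg_eq_0_iff) auto
  then show ?thesis
    using assms(3) by simp
qed

lemma inner_L2_span_fn_eq_0:
  assumes "\<forall>i\<in>I. inner_L2 \<Omega> u (v i) = 0" "q \<in> span_fn I v"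
  shows "inner_L2 \<Omega> u q = 0"
proof -
  obtain c where "q = (\<lambda>x. \<Sum>i\<in>I. c i * v i x)"
    using assms(2) unfolding span_fn_def by blast
  then show ?thesis
    using assms(1) by (simp add: inner_L2_sum_right)
qed

lemma span_fn_mono:
  assumes "I \<subseteq> J" "finite J"
  shows "span_fn I v \<subseteq> span_fn J v"
proof (rule span_fn_subset[OF subspace_fn_span_fn])
  show "v i \<in> span_fn J v" if "i \<in> I" for i
    using span_fn_mem[of J i v] assms that by blast
qed

text \<open>If \<open>inner_L2 \<Omega> w w = 0\<close> the coefficient is \<open>0\<close> by the division convention, and then \<open>w\<close>
  vanishes on \<open>Pow \<Omega>\<close>, so the claim still holds.\<close>
lemma inner_L2_projection_residual:
  assumes "finite \<Omega>"
  shows "inner_L2 \<Omega> (\<lambda>x. u x - inner_L2 \<Omega> u w / inner_L2 \<Omega> w w * w x) w = 0"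
proof -
  have eq: "inner_L2 \<Omega> (\<lambda>x. u x - inner_L2 \<Omega> u w / inner_L2 \<Omega> w w * w x) w
      = inner_L2 \<Omega> u w - inner_L2 \<Omega> u w / inner_L2 \<Omega> w w * inner_L2 \<Omega> w w"
    by (simp only: inner_L2_diff_left inner_L2_scale_left)
  show ?thesis
  proof (cases "inner_L2 \<Omega> w w = 0")
    case True
    then have "inner_L2 \<Omega> u w = 0"
      using inner_L2_self_eq_0D[OF assms True] unfolding inner_L2_def by simp
    then show ?thesis
      unfolding eq by simp
  next
    case False
    then show ?thesis
      unfolding eq by simp
  qed
qed

text \<open>Gram-Schmidt: the new residual is the old one minus its component along the part of the
  new vector orthogonal to the old ones.\<close>
lemma orthogonal_decomposition:
  assumes "finite \<Omega>" "finite I"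
  shows "\<exists>p\<in>span_fn I v. \<forall>i\<in>I. inner_L2 \<Omega> (\<lambda>x. \<psi> x - p x) (v i) = 0"
  using assms(2)
proof (induction I arbitrary: \<psi> rule: finite_induct)
  case empty
  show ?case
    using subspace_fn_zero[OF subspace_fn_span_fn] by blast
next
  case (insert j I)
  let ?S = "span_fn (insert j I) v"
  obtain p where p: "p \<in> span_fn I v" "\<forall>i\<in>I. inner_L2 \<Omega> (\<lambda>x. \<psi> x - p x) (v i) = 0"
    using insert.IH by blast
  obtain q where q: "q \<in> span_fn I v" "\<forall>i\<in>I. inner_L2 \<Omega> (\<lambda>x. v j x - q x) (v i) = 0"
    using insert.IH by blast
  define w where "w = (\<lambda>x. v j x + (-1) * q x)"
  define \<beta> where "\<beta> = inner_L2 \<Omega> (\<lambda>x. \<psi> x - p x) w / inner_L2 \<Omega> w w"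
  define res where "res = (\<lambda>x. (\<psi> x - p x) - \<beta> * w x)"
  have sub: "span_fn I v \<subseteq> ?S"
    by (rule span_fn_mono) (use insert.hyps in auto)
  have "v j \<in> ?S"
    using span_fn_mem[of "insert j I" j v] insert.hyps by blast
  then have "w \<in> ?S"
    unfolding w_def using sub q(1)
    by (intro subspace_fn_add[OF subspace_fn_span_fn] subspace_fn_scale[OF subspace_fn_span_fn]) auto
  then have p': "(\<lambda>x. p x + \<beta> * w x) \<in> ?S"
    using sub p(1)
    by (intro subspace_fn_add[OF subspace_fn_span_fn] subspace_fn_scale[OF subspace_fn_span_fn]) auto
  have res_eq: "(\<lambda>x. \<psi> x - (p x + \<beta> * w x)) = res"
    unfolding res_def by (simp add: algebra_simps)
  have w_orth: "\<forall>i\<in>I. inner_L2 \<Omega> w (v i) = 0"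
    using q(2) unfolding w_def by simp
  have res_orth: "\<forall>i\<in>I. inner_L2 \<Omega> res (v i) = 0"
    using p(2) w_orth unfolding res_def by (simp add: inner_L2_diff_left inner_L2_scale_left)
  have "inner_L2 \<Omega> res w = 0"
    unfolding res_def \<beta>_def by (rule inner_L2_projection_residual[OF assms(1)])
  moreover have "v j = (\<lambda>x. w x + q x)"
    unfolding w_def by simp
  ultimately have "inner_L2 \<Omega> res (v j) = 0"
    using inner_L2_span_fn_eq_0[OF res_orth q(1)] by (simp add: inner_L2_add_right)
  with res_orth have orth: "\<forall>i\<in>insert j I. inner_L2 \<Omega> (\<lambda>x. \<psi> x - (p x + \<beta> * w x)) (v i) = 0"
    unfolding res_eq by simp
  show ?case
    by (rule bexI[of "\<lambda>p. \<forall>i\<in>insert j I. inner_L2 \<Omega> (\<lambda>x. \<psi> x - p x) (v i) = 0", OF orth p'])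
qed

section \<open>Two-column tableaux and polytabloids\<close>

lemma sum_eq_0_sign_reversing_involution:
  fixes f :: "'b \<Rightarrow> complex"
  assumes "\<And>x. x \<in> A \<Longrightarrow> h x \<in> A" "\<And>x. x \<in> A \<Longrightarrow> h (h x) = x"
    "\<And>x. x \<in> A \<Longrightarrow> f (h x) = - f x"
  shows "sum f A = 0"
proof -
  have "sum f A = sum (\<lambda>x. f (h x)) A"
    by (rule sum.reindex_bij_witness[where i=h and j=h]) (use assms in auto)
  also have "\<dots> = - sum f A"
    using assms(3) by (simp add: sum_negf)
  finally show ?thesis
    by simp
qed

lemma minus_one_power_card_sym_diff:
  assumes "finite K" "finite J"
  shows "(-1::complex) ^ card (sym_diff K J) = (-1) ^ card K * (-1) ^ card J"
proof -
  have "card (sym_diff K J) = card (K - J) + card (J - K)"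
    using assms by (intro card_Un_disjoint) auto
  moreover have "card K = card (K - J) + card (K \<inter> J)" "card J = card (J - K) + card (K \<inter> J)"
    using card_Int_Diff[of K J] card_Int_Diff[of J K] assms by (simp_all add: Int_commute)
  ultimately show ?thesis
    by (simp add: power_add mult_ac flip: power2_eq_square power_mult)
qed

lemma L2r_eq_0: "u \<in> L2r \<Omega> r \<Longrightarrow> \<not> (x \<subseteq> \<Omega> \<and> card x = r) \<Longrightarrow> u x = 0"
  unfolding L2r_def by auto

definition transversal :: "nat \<Rightarrow> 'a list \<Rightarrow> 'a list \<Rightarrow> 'a set \<Rightarrow> bool" where
  "transversal s a b x \<longleftrightarrow> x \<subseteq> set a \<union> set b \<and> (\<forall>i<s. (a!i \<in> x) \<noteq> (b!i \<in> x))"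

definition swapped_row :: "nat \<Rightarrow> 'a list \<Rightarrow> 'a list \<Rightarrow> nat set \<Rightarrow> 'a set" where
  "swapped_row s a b J = {b ! i | i. i < s \<and> i \<notin> J} \<union> {a ! i | i. i \<in> J}"

text \<open>The permutation exchanging the two entries of each column in \<open>J\<close>.\<close>
definition column_swap :: "nat \<Rightarrow> 'a list \<Rightarrow> 'a list \<Rightarrow> nat set \<Rightarrow> 'a \<Rightarrow> 'a" where
  "column_swap s a b J z =
    (if \<exists>i<s. i \<in> J \<and> z = a!i then b ! (THE i. i < s \<and> z = a!i)
     else if \<exists>i<s. i \<in> J \<and> z = b!i then a ! (THE i. i < s \<and> z = b!i) else z)"

locale two_column_tableau =
  fixes \<Omega> :: "'a set" and s :: nat and a b :: "'a list"
  assumes finite_Omega: "finite \<Omega>" and length_a: "length a = s" and length_b: "length b = s"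
    and distinct_ab: "distinct (a @ b)" and set_ab_subset: "set (a @ b) \<subseteq> \<Omega>"
begin

abbreviation entries :: "'a set" where
  "entries \<equiv> set a \<union> set b"

lemma a_neq_b: "i < s \<Longrightarrow> j < s \<Longrightarrow> a!i \<noteq> b!j"
  using distinct_ab length_a length_b by (metis disjoint_iff distinct_append nth_mem)

lemma a_eq_iff: "i < s \<Longrightarrow> j < s \<Longrightarrow> a!i = a!j \<longleftrightarrow> i = j"
  using distinct_ab length_a by (simp add: nth_eq_iff_index_eq)

lemma b_eq_iff: "i < s \<Longrightarrow> j < s \<Longrightarrow> b!i = b!j \<longleftrightarrow> i = j"
  using distinct_ab length_b by (simp add: nth_eq_iff_index_eq)

lemma entries_cases:
  assumes "z \<in> entries"
  obtains i where "i < s" "z = a!i" | i where "i < s" "z = b!i"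
  using assms length_a length_b by (metis Un_iff in_set_conv_nth)

lemma a_in_entries: "i < s \<Longrightarrow> a!i \<in> entries"
  using length_a by simp

lemma b_in_entries: "i < s \<Longrightarrow> b!i \<in> entries"
  using length_b by simp

lemma entries_subset: "entries \<subseteq> \<Omega>"
  using set_ab_subset by simp

lemma card_entries: "card entries = 2 * s"
  using distinct_ab length_a length_b by (simp add: card_Un_disjoint distinct_card[symmetric])

lemma a_in_swapped_row_iff: "J \<subseteq> {..<s} \<Longrightarrow> i < s \<Longrightarrow> a!i \<in> swapped_row s a b J \<longleftrightarrow> i \<in> J"
  unfolding swapped_row_def using a_neq_b a_eq_iff by auto

lemma b_in_swapped_row_iff: "J \<subseteq> {..<s} \<Longrightarrow> i < s \<Longrightarrow> b!i \<in> swapped_row s a b J \<longleftrightarrow> i \<notin> J"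
  unfolding swapped_row_def using a_neq_b b_eq_iff by (auto, metis subsetD lessThan_iff a_neq_b)

lemma swapped_row_subset: "J \<subseteq> {..<s} \<Longrightarrow> swapped_row s a b J \<subseteq> entries"
  unfolding swapped_row_def using length_a length_b by auto

lemma transversal_swapped_row: "J \<subseteq> {..<s} \<Longrightarrow> transversal s a b (swapped_row s a b J)"
  unfolding transversal_def using swapped_row_subset a_in_swapped_row_iff b_in_swapped_row_iff
  by auto

lemma top_columns_swapped_row: "J \<subseteq> {..<s} \<Longrightarrow> {i. i < s \<and> a!i \<in> swapped_row s a b J} = J"
  using a_in_swapped_row_iff by auto

lemma transversal_eq_swapped_row:
  assumes "transversal s a b x"
  shows "x = swapped_row s a b {i. i < s \<and> a!i \<in> x}"
proof
  show "x \<subseteq> swapped_row s a b {i. i < s \<and> a!i \<in> x}"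
  proof
    fix z assume z: "z \<in> x"
    then have "z \<in> entries"
      using assms unfolding transversal_def by auto
    then show "z \<in> swapped_row s a b {i. i < s \<and> a!i \<in> x}"
    proof (cases rule: entries_cases)
      case (2 i)
      then have "a!i \<notin> x"
        using assms z unfolding transversal_def by auto
      then show ?thesis
        using 2 unfolding swapped_row_def by auto
    qed (use z in \<open>auto simp: swapped_row_def\<close>)
  qed
  show "swapped_row s a b {i. i < s \<and> a!i \<in> x} \<subseteq> x"
    using assms unfolding swapped_row_def transversal_def by auto
qed

lemma inj_on_swapped_row: "inj_on (swapped_row s a b) (Pow {..<s})"
  by (rule inj_onI) (metis PowD top_columns_swapped_row)

lemma card_swapped_row:
  assumes "J \<subseteq> {..<s}"
  shows "card (swapped_row s a b J) = s"
proof -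
  let ?f = "\<lambda>i. if i \<in> J then a!i else b!i"
  have "swapped_row s a b J = ?f ` {..<s}"
    unfolding swapped_row_def using assms by auto
  moreover have "inj_on ?f {..<s}"
  proof (rule inj_onI)
    fix i j assume "i \<in> {..<s}" "j \<in> {..<s}" and "?f i = ?f j"
    then show "i = j"
      using a_neq_b[of i j] a_neq_b[of j i] a_eq_iff[of i j] b_eq_iff[of i j]
      by (auto split: if_splits)
  qed
  ultimately show ?thesis
    using card_image[of ?f "{..<s}"] by simp
qed

lemma transversalE:
  assumes "transversal s a b x"
  obtains K where "K \<subseteq> {..<s}" "x = swapped_row s a b K"
  by (rule that[OF _ transversal_eq_swapped_row[OF assms]]) auto

lemma card_transversal: "transversal s a b x \<Longrightarrow> card x = s"
  by (metis transversalE card_swapped_row)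

lemma transversal_subset_Omega: "transversal s a b x \<Longrightarrow> x \<subseteq> \<Omega>"
  using entries_subset unfolding transversal_def by blast

lemma transversal_if_card:
  assumes "x \<subseteq> \<Omega>" "card x = s" "\<forall>i<s. (a!i \<in> x) \<noteq> (b!i \<in> x)"
  shows "transversal s a b x"
proof -
  have "transversal s a b (x \<inter> entries)"
    unfolding transversal_def using assms(3) a_in_entries b_in_entries by auto
  then have "card (x \<inter> entries) = card x"
    using card_transversal assms(2) by simp
  then have "x \<inter> entries = x"
    using assms(1) finite_Omega by (metis card_subset_eq finite_subset inf_le1)
  then show ?thesis
    unfolding transversal_def using assms(3) by blast
qed

lemma polytabloid_eq:
  "polytabloid s a b x =
    (if transversal s a b x then (-1) ^ card {i. i < s \<and> a!i \<in> x} else 0)"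
proof -
  have poly: "polytabloid s a b x =
      (\<Sum>J\<in>Pow {..<s}. if x = swapped_row s a b J then (-1) ^ card J else 0)"
    unfolding polytabloid_def swapped_row_def by simp
  show ?thesis
  proof (cases "transversal s a b x")
    case True
    define K where "K = {i. i < s \<and> a!i \<in> x}"
    have K: "K \<in> Pow {..<s}"
      unfolding K_def by auto
    have "x = swapped_row s a b J \<longleftrightarrow> J = K" if "J \<in> Pow {..<s}" for J
      using True transversal_eq_swapped_row top_columns_swapped_row that unfolding K_def
      by (metis PowD)
    then have "polytabloid s a b x = (\<Sum>J\<in>Pow {..<s}. if J = K then (-1) ^ card J else 0)"
      unfolding poly by (intro sum.cong) auto
    then show ?thesis
      using True K unfolding K_def by simp
  next
    case False
    then have "x \<noteq> swapped_row s a b J" if "J \<in> Pow {..<s}" for J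
      using transversal_swapped_row that by blast
    then show ?thesis
      unfolding poly using False by simp
  qed
qed

lemma polytabloid_swapped_row: "J \<subseteq> {..<s} \<Longrightarrow> polytabloid s a b (swapped_row s a b J) = (-1) ^ card J"
  by (simp add: polytabloid_eq transversal_swapped_row top_columns_swapped_row)

lemma the_index_a: "i < s \<Longrightarrow> (THE j. j < s \<and> a!i = a!j) = i"
  using a_eq_iff by (intro the_equality) auto

lemma the_index_b: "i < s \<Longrightarrow> (THE j. j < s \<and> b!i = b!j) = i"
  using b_eq_iff by (intro the_equality) auto

lemma column_swap_a: "i < s \<Longrightarrow> column_swap s a b J (a!i) = (if i \<in> J then b!i else a!i)"
proof -
  assume i: "i < s"
  have "(\<exists>j<s. j \<in> J \<and> a!i = a!j) \<longleftrightarrow> i \<in> J" "\<not> (\<exists>j<s. j \<in> J \<and> a!i = b!j)"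
    using a_eq_iff a_neq_b i by blast+
  then show ?thesis
    using the_index_a[OF i] by (auto simp: column_swap_def)
qed

lemma column_swap_b: "i < s \<Longrightarrow> column_swap s a b J (b!i) = (if i \<in> J then a!i else b!i)"
proof -
  assume i: "i < s"
  have "(\<exists>j<s. j \<in> J \<and> b!i = b!j) \<longleftrightarrow> i \<in> J" "\<not> (\<exists>j<s. j \<in> J \<and> b!i = a!j)"
    using b_eq_iff a_neq_b i by metis+
  then show ?thesis
    using the_index_b[OF i] by (auto simp: column_swap_def)
qed

lemma column_swap_other: "z \<notin> entries \<Longrightarrow> column_swap s a b J z = z"
  unfolding column_swap_def using a_in_entries b_in_entries by auto

lemma column_swap_involution: "column_swap s a b J (column_swap s a b J z) = z"
proof (cases "z \<in> entries")
  case True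
  then show ?thesis
    by (cases rule: entries_cases) (auto simp: column_swap_a column_swap_b)
qed (simp add: column_swap_other)

lemma column_swap_in_entries_iff: "column_swap s a b J z \<in> entries \<longleftrightarrow> z \<in> entries"
proof (cases "z \<in> entries")
  case True
  then show ?thesis
    by (cases rule: entries_cases) (auto simp: column_swap_a column_swap_b length_a length_b)
qed (simp add: column_swap_other)

lemma column_swap_in_Omega_iff: "column_swap s a b J z \<in> \<Omega> \<longleftrightarrow> z \<in> \<Omega>"
  by (metis entries_subset subsetD column_swap_in_entries_iff column_swap_other)

lemma in_column_swap_image_iff: "w \<in> column_swap s a b J ` x \<longleftrightarrow> column_swap s a b J w \<in> x"
proof
  assume "w \<in> column_swap s a b J ` x"
  then show "column_swap s a b J w \<in> x"
    by (auto simp: column_swap_involution)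
next
  assume "column_swap s a b J w \<in> x"
  then have "column_swap s a b J (column_swap s a b J w) \<in> column_swap s a b J ` x"
    by (rule imageI)
  then show "w \<in> column_swap s a b J ` x"
    by (simp add: column_swap_involution)
qed

lemma column_swap_image_subset_Omega_iff: "column_swap s a b J ` x \<subseteq> \<Omega> \<longleftrightarrow> x \<subseteq> \<Omega>"
  using column_swap_in_Omega_iff in_column_swap_image_iff by blast

lemma bij_column_swap: "bij (column_swap s a b J)"
  by (metis bijI' column_swap_involution)

lemma column_swap_permutes: "column_swap s a b J permutes \<Omega>"
  unfolding permutes_def
  by (metis column_swap_involution column_swap_other entries_subset subsetD)

lemma inv_column_swap: "inv (column_swap s a b J) = column_swap s a b J"
  by (metis inv_equality column_swap_involution)

lemma rho_column_swap: "rho (column_swap s a b J) \<phi> = (\<lambda>x. \<phi> (column_swap s a b J ` x))"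
  unfolding rho_def inv_column_swap ..

lemma card_column_swap_image: "card (column_swap s a b J ` x) = card x"
  by (rule card_image[OF inj_on_subset[OF bij_is_inj[OF bij_column_swap] subset_UNIV]])

lemma a_in_column_swap_image_iff:
  "i < s \<Longrightarrow> a!i \<in> column_swap s a b J ` x \<longleftrightarrow> (if i \<in> J then b!i \<in> x else a!i \<in> x)"
  by (simp add: in_column_swap_image_iff column_swap_a)

lemma b_in_column_swap_image_iff:
  "i < s \<Longrightarrow> b!i \<in> column_swap s a b J ` x \<longleftrightarrow> (if i \<in> J then a!i \<in> x else b!i \<in> x)"
  by (simp add: in_column_swap_image_iff column_swap_b)

lemma transversal_column_swap_image:
  "transversal s a b (column_swap s a b J ` x) \<longleftrightarrow> transversal s a b x"
proof -
  have "column_swap s a b J ` x \<subseteq> entries \<longleftrightarrow> x \<subseteq> entries"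
    using column_swap_in_entries_iff in_column_swap_image_iff by blast
  then show ?thesis
    unfolding transversal_def using a_in_column_swap_image_iff b_in_column_swap_image_iff
    by auto
qed

lemma top_columns_column_swap_image:
  assumes "transversal s a b x" "J \<subseteq> {..<s}"
  shows "{i. i < s \<and> a!i \<in> column_swap s a b J ` x} = sym_diff {i. i < s \<and> a!i \<in> x} J"
proof (rule set_eqI)
  fix i
  have "b!i \<in> x \<longleftrightarrow> a!i \<notin> x" if "i < s"
    using assms(1) that unfolding transversal_def by auto
  then show "i \<in> {i. i < s \<and> a!i \<in> column_swap s a b J ` x} \<longleftrightarrow> i \<in> sym_diff {i. i < s \<and> a!i \<in> x} J"
    using assms(2) by (cases "i < s") (auto simp: a_in_column_swap_image_iff)
qed

lemma column_swap_swapped_row: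
  assumes "K \<subseteq> {..<s}" "J \<subseteq> {..<s}"
  shows "column_swap s a b J ` swapped_row s a b K = swapped_row s a b (sym_diff K J)"
proof -
  have "transversal s a b (column_swap s a b J ` swapped_row s a b K)"
    using transversal_column_swap_image transversal_swapped_row assms(1) by blast
  then show ?thesis
    using transversal_eq_swapped_row top_columns_column_swap_image[OF transversal_swapped_row[OF assms(1)] assms(2)]
      top_columns_swapped_row[OF assms(1)] by metis
qed

lemma polytabloid_column_swap:
  assumes J: "J \<subseteq> {..<s}"
  shows "polytabloid s a b (column_swap s a b J ` x) = (-1) ^ card J * polytabloid s a b x"
proof (cases "transversal s a b x")
  case True
  have "finite {i. i < s \<and> a!i \<in> x}" "finite J"
    using J finite_subset by auto
  then show ?thesis
    using True
    by (simp add: polytabloid_eq transversal_column_swap_image top_columns_column_swap_image[OF True J]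
        minus_one_power_card_sym_diff mult.commute)
next
  case False
  then show ?thesis
    by (simp add: polytabloid_eq transversal_column_swap_image)
qed

lemma column_swap_singleton_fixes:
  assumes "i < s" "a!i \<in> x \<longleftrightarrow> b!i \<in> x"
  shows "column_swap s a b {i} ` x = x"
proof (rule set_eqI)
  fix w
  show "w \<in> column_swap s a b {i} ` x \<longleftrightarrow> w \<in> x"
    unfolding in_column_swap_image_iff
  proof (cases "w \<in> entries")
    case True
    then show "column_swap s a b {i} w \<in> x \<longleftrightarrow> w \<in> x"
      by (cases rule: entries_cases) (use assms in \<open>auto simp: column_swap_a column_swap_b\<close>)
  qed (simp add: column_swap_other)
qed

lemma inner_L2_polytabloid:
  "inner_L2 \<Omega> u (polytabloid s a b) = (\<Sum>J\<in>Pow {..<s}. (-1) ^ card J * u (swapped_row s a b J))"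
proof -
  have "inner_L2 \<Omega> u (polytabloid s a b) = (\<Sum>y\<in>Pow \<Omega>. u y * polytabloid s a b y)"
    unfolding inner_L2_def by (intro sum.cong) (auto simp: polytabloid_eq)
  also have "\<dots> = (\<Sum>y\<in>swapped_row s a b ` Pow {..<s}. u y * polytabloid s a b y)"
  proof (rule sum.mono_neutral_right)
    show "swapped_row s a b ` Pow {..<s} \<subseteq> Pow \<Omega>"
      using swapped_row_subset entries_subset by blast
    have "\<not> transversal s a b y" if "y \<notin> swapped_row s a b ` Pow {..<s}" for y
      using that by (metis transversalE PowI image_eqI)
    then show "\<forall>y\<in>Pow \<Omega> - swapped_row s a b ` Pow {..<s}. u y * polytabloid s a b y = 0"
      by (simp add: polytabloid_eq)
  qed (use finite_Omega in simp)
  also have "\<dots> = (\<Sum>J\<in>Pow {..<s}. u (swapped_row s a b J) * (-1) ^ card J)"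
    by (simp add: sum.reindex[OF inj_on_swapped_row] polytabloid_swapped_row)
  finally show ?thesis
    by (simp add: mult.commute)
qed

lemma alternating_sum_column_swaps_eq_0:
  fixes u :: "'a fn"
  assumes i: "i < s" "a!i \<in> x \<longleftrightarrow> b!i \<in> x"
  shows "(\<Sum>J\<in>Pow {..<s}. (-1) ^ card J * u (column_swap s a b J ` x)) = 0"
proof (rule sum_eq_0_sign_reversing_involution[where h="\<lambda>J. sym_diff J {i}"])
  fix J assume J: "J \<in> Pow {..<s}"
  have "column_swap s a b (sym_diff J {i}) ` x = column_swap s a b J ` x"
  proof (rule set_eqI)
    fix w
    show "w \<in> column_swap s a b (sym_diff J {i}) ` x \<longleftrightarrow> w \<in> column_swap s a b J ` x"
      unfolding in_column_swap_image_iff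
    proof (cases "w \<in> entries")
      case True
      then show "column_swap s a b (sym_diff J {i}) w \<in> x \<longleftrightarrow> column_swap s a b J w \<in> x"
        by (cases rule: entries_cases) (use i in \<open>auto simp: column_swap_a column_swap_b\<close>)
    qed (simp add: column_swap_other)
  qed
  moreover have "finite J"
    using J finite_subset by auto
  ultimately show "(-1) ^ card (sym_diff J {i}) * u (column_swap s a b (sym_diff J {i}) ` x)
      = - ((-1) ^ card J * u (column_swap s a b J ` x))"
    using minus_one_power_card_sym_diff[of J "{i}"] by simp
qed (use i in auto)

lemma column_antisymmetrizer:
  assumes u: "u \<in> L2r \<Omega> s"
  shows "(\<Sum>J\<in>Pow {..<s}. (-1) ^ card J * u (column_swap s a b J ` x))
       = inner_L2 \<Omega> u (polytabloid s a b) * polytabloid s a b x"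
proof (cases "transversal s a b x")
  case True
  define K where "K = {i. i < s \<and> a!i \<in> x}"
  have K: "K \<subseteq> {..<s}" "finite K"
    unfolding K_def by auto
  have x: "x = swapped_row s a b K"
    using transversal_eq_swapped_row[OF True] K_def by simp
  have sym_diff_twice: "sym_diff K (sym_diff K J) = J" for J :: "nat set"
    by blast
  have "(\<Sum>J\<in>Pow {..<s}. (-1) ^ card J * u (column_swap s a b J ` x))
      = (\<Sum>J\<in>Pow {..<s}. (-1) ^ card J * u (swapped_row s a b (sym_diff K J)))"
    using x K column_swap_swapped_row by (intro sum.cong) auto
  also have "\<dots> = (\<Sum>J\<in>Pow {..<s}. (-1) ^ card (sym_diff K J) * u (swapped_row s a b J))"
    by (rule sum.reindex_bij_witness[where i="sym_diff K" and j="sym_diff K"])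
      (use K in \<open>auto simp: sym_diff_twice\<close>)
  also have "\<dots> = (\<Sum>J\<in>Pow {..<s}. (-1) ^ card K * ((-1) ^ card J * u (swapped_row s a b J)))"
    using K by (intro sum.cong refl) (simp add: minus_one_power_card_sym_diff finite_subset)
  finally show ?thesis
    using True by (simp add: polytabloid_eq inner_L2_polytabloid K_def sum_distrib_left mult.commute)
next
  case not_transversal: False
  show ?thesis
  proof (cases "x \<subseteq> \<Omega> \<and> card x = s")
    case True
    then obtain i where i: "i < s" "a!i \<in> x \<longleftrightarrow> b!i \<in> x"
      using transversal_if_card not_transversal by blast
    then have "(\<Sum>J\<in>Pow {..<s}. (-1) ^ card J * u (column_swap s a b J ` x)) = 0"
      by (rule alternating_sum_column_swaps_eq_0)
    then show ?thesis
      using not_transversal by (simp add: polytabloid_eq)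
  next
    case False
    have "u (column_swap s a b J ` x) = 0" for J
      by (rule L2r_eq_0[OF u])
        (use False in \<open>simp add: card_column_swap_image column_swap_image_subset_Omega_iff\<close>)
    then show ?thesis
      using not_transversal by (simp add: polytabloid_eq)
  qed
qed

end

section \<open>The Specht module\<close>

lemma Sym_iff [simp]: "g \<in> Sym \<Omega> \<longleftrightarrow> g permutes \<Omega>"
  unfolding Sym_def by simp

lemma rho_permutes: "g permutes \<Omega> \<Longrightarrow> rho g \<psi> = (\<lambda>x. \<psi> (g -` x))"
  unfolding rho_def by (simp add: bij_vimage_eq_inv_image permutes_bij)

lemma exists_permutes_map:
  "distinct xs \<Longrightarrow> distinct ys \<Longrightarrow> length xs = length ys \<Longrightarrow> set xs \<subseteq> \<Omega> \<Longrightarrow> set ys \<subseteq> \<Omega>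
    \<Longrightarrow> \<exists>g. g permutes \<Omega> \<and> map g xs = ys"
proof (induction xs arbitrary: ys)
  case Nil
  then show ?case
    by (metis length_0_conv list.map(1) permutes_id)
next
  case (Cons x xs)
  then obtain y ys' where ys: "ys = y # ys'"
    by (cases ys) auto
  then obtain g where g: "g permutes \<Omega>" "map g xs = ys'"
    using Cons by auto
  define h where "h = transpose y (g x) \<circ> g"
  have "g x \<in> \<Omega>"
    using g Cons.prems by (simp add: permutes_in_image)
  have "h permutes \<Omega>"
    unfolding h_def
    by (rule permutes_compose[OF g(1) permutes_swap_id]) (use Cons.prems ys \<open>g x \<in> \<Omega>\<close> in auto)
  moreover have "h z = g z" if "z \<in> set xs" for z
  proof -
    have "g z \<noteq> y"
      using g(2) that Cons.prems ys by auto
    moreover have "g z \<noteq> g x"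
      using permutes_inj[OF g(1)] that Cons.prems(1) by (auto dest: injD)
    ultimately show "h z = g z"
      unfolding h_def by (simp add: transpose_def)
  qed
  then have "map h xs = ys'"
    using g(2) by (metis map_eq_conv)
  then have "map h (x # xs) = ys"
    using ys unfolding h_def by (simp add: transpose_def)
  ultimately show ?case
    by blast
qed

lemma bij_vimage_subset_iff:
  assumes "bij g"
  shows "g -` x \<subseteq> A \<longleftrightarrow> x \<subseteq> g ` A"
proof
  assume "g -` x \<subseteq> A"
  then show "x \<subseteq> g ` A"
    using bij_is_surj[OF assms] by (metis image_mono surj_image_vimage_eq)
next
  assume "x \<subseteq> g ` A"
  then show "g -` x \<subseteq> A"
    using bij_is_inj[OF assms] by (auto dest: injD)
qed

definition polytabloid_of :: "nat \<Rightarrow> 'a list \<times> 'a list \<Rightarrow> 'a fn" where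
  "polytabloid_of s t = polytabloid s (fst t) (snd t)"

definition map_tableau :: "('a \<Rightarrow> 'a) \<Rightarrow> 'a list \<times> 'a list \<Rightarrow> 'a list \<times> 'a list" where
  "map_tableau g t = (map g (fst t), map g (snd t))"

lemma specht2_eq_span_fn: "specht2 \<Omega> s = span_fn (tableaux2 \<Omega> s) (polytabloid_of s)"
  unfolding specht2_def span_fn_def polytabloid_of_def ..

lemma subspace_fn_specht2: "subspace_fn (specht2 \<Omega> s)"
  unfolding specht2_eq_span_fn by (rule subspace_fn_span_fn)

lemma tableaux2_iff:
  "finite \<Omega> \<Longrightarrow> t \<in> tableaux2 \<Omega> s \<longleftrightarrow> two_column_tableau \<Omega> s (fst t) (snd t)"
  unfolding tableaux2_def two_column_tableau_def by (cases t) auto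

lemma finite_tableaux2: "finite \<Omega> \<Longrightarrow> finite (tableaux2 \<Omega> s)"
proof -
  assume "finite \<Omega>"
  then have "finite ({xs. set xs \<subseteq> \<Omega> \<and> length xs = s} \<times> {xs. set xs \<subseteq> \<Omega> \<and> length xs = s})"
    using finite_lists_length_eq by blast
  moreover have "tableaux2 \<Omega> s
      \<subseteq> {xs. set xs \<subseteq> \<Omega> \<and> length xs = s} \<times> {xs. set xs \<subseteq> \<Omega> \<and> length xs = s}"
    unfolding tableaux2_def by auto
  ultimately show ?thesis
    by (rule finite_subset[rotated])
qed

lemma tableaux2_nonempty:
  assumes "finite \<Omega>" "2 * s \<le> card \<Omega>"
  obtains t where "t \<in> tableaux2 \<Omega> s"
proof -
  obtain xs where xs: "set xs = \<Omega>" "distinct xs"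
    using finite_distinct_list[OF assms(1)] by blast
  define a where "a = take s xs"
  define b where "b = take s (drop s xs)"
  have "length xs = card \<Omega>"
    using xs distinct_card by fastforce
  moreover have "a @ b = take (2 * s) xs"
    unfolding a_def b_def by (simp add: take_add mult_2)
  then have "distinct (a @ b)" "set (a @ b) \<subseteq> \<Omega>"
    using xs by (auto dest: in_set_takeD)
  ultimately have "(a, b) \<in> tableaux2 \<Omega> s"
    unfolding tableaux2_def using assms(2) by (auto simp: a_def b_def)
  then show ?thesis
    by (rule that)
qed

lemma map_tableau_in_tableaux2:
  assumes g: "g permutes \<Omega>" and t: "t \<in> tableaux2 \<Omega> s"
  shows "map_tableau g t \<in> tableaux2 \<Omega> s"
proof -
  obtain a b where ab: "t = (a, b)"
    by (cases t)
  have "distinct (map g a @ map g b)"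
    unfolding map_append[symmetric] distinct_map
    using t inj_on_subset[OF permutes_inj[OF g] subset_UNIV] unfolding ab tableaux2_def by auto
  moreover have "set (map g a @ map g b) \<subseteq> \<Omega>"
    using t permutes_in_image[OF g] unfolding ab tableaux2_def by auto
  ultimately show ?thesis
    using t unfolding ab tableaux2_def map_tableau_def by simp
qed

lemma map_tableau_inv_map_tableau:
  "g permutes \<Omega> \<Longrightarrow> map_tableau (inv g) (map_tableau g t) = t"
  unfolding map_tableau_def by (simp add: permutes_inj inv_o_cancel)

lemma map_tableau_map_tableau_inv:
  "g permutes \<Omega> \<Longrightarrow> map_tableau g (map_tableau (inv g) t) = t"
  unfolding map_tableau_def using permutes_surj[of g \<Omega>] by (simp add: surj_iff)

lemma tableaux2_transitive:
  assumes "t \<in> tableaux2 \<Omega> s" "t' \<in> tableaux2 \<Omega> s"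
  obtains g where "g permutes \<Omega>" "map_tableau g t = t'"
proof -
  obtain g where g: "g permutes \<Omega>" "map g (fst t @ snd t) = fst t' @ snd t'"
    using exists_permutes_map[of "fst t @ snd t" "fst t' @ snd t'" \<Omega>] assms
    unfolding tableaux2_def by auto
  then have "map_tableau g t = t'"
    using assms unfolding tableaux2_def map_tableau_def by (auto simp: append_eq_append_conv)
  then show ?thesis
    using that g(1) by blast
qed

context two_column_tableau
begin

lemma rho_polytabloid:
  assumes g: "g permutes \<Omega>"
  shows "rho g (polytabloid s a b) = polytabloid s (map g a) (map g b)"
proof
  fix x
  interpret g: two_column_tableau \<Omega> s "map g a" "map g b"
    using map_tableau_in_tableaux2[OF g, of "(a, b)" s] tableaux2_iff[OF finite_Omega, of _ s]
      tableaux2_iff[OF finite_Omega, of "(a, b)" s] two_column_tableau_axioms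
    unfolding map_tableau_def by simp
  have "g -` x \<subseteq> entries \<longleftrightarrow> x \<subseteq> g ` entries"
    by (rule bij_vimage_subset_iff[OF permutes_bij[OF g]])
  then have "transversal s a b (g -` x) \<longleftrightarrow> transversal s (map g a) (map g b) x"
    unfolding transversal_def using length_a length_b by (simp add: image_Un)
  moreover have "{i. i < s \<and> a!i \<in> g -` x} = {i. i < s \<and> map g a ! i \<in> x}"
    using length_a by auto
  ultimately show "rho g (polytabloid s a b) x = polytabloid s (map g a) (map g b) x"
    unfolding rho_permutes[OF g] polytabloid_eq g.polytabloid_eq by simp
qed

lemma polytabloid_nonzero: "polytabloid s a b \<noteq> (\<lambda>x. 0)"
proof
  assume "polytabloid s a b = (\<lambda>x. 0)"
  then show False
    using polytabloid_swapped_row[of "{}"] by simp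
qed

lemma sum_polytabloid_insert_eq_0:
  assumes "1 \<le> s" "y \<subseteq> \<Omega>" "card y = s - 1"
  shows "(\<Sum>z\<in>\<Omega> - y. polytabloid s a b (insert z y)) = 0"
proof (cases "\<exists>i<s. a!i \<notin> y \<and> b!i \<notin> y")
  case True
  then obtain i where i: "i < s" "a!i \<notin> y" "b!i \<notin> y"
    by blast
  let ?h = "column_swap s a b {i}"
  have fixes_y: "?h ` y = y"
    using column_swap_singleton_fixes i by simp
  show ?thesis
  proof (rule sum_eq_0_sign_reversing_involution[where h="?h"])
    fix z assume z: "z \<in> \<Omega> - y"
    have "?h z \<notin> y"
      using z fixes_y in_column_swap_image_iff by blast
    then show "?h z \<in> \<Omega> - y"
      using z column_swap_in_Omega_iff by simp
    show "?h (?h z) = z"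
      by (rule column_swap_involution)
    have "insert (?h z) y = ?h ` insert z y"
      using fixes_y by simp
    then show "polytabloid s a b (insert (?h z) y) = - polytabloid s a b (insert z y)"
      using polytabloid_column_swap[of "{i}" "insert z y"] i by simp
  qed
next
  case False
  have "\<not> transversal s a b (insert z y)" for z
  proof
    assume z: "transversal s a b (insert z y)"
    then have "transversal s a b y"
      using False unfolding transversal_def by auto
    then show False
      using card_transversal assms by simp
  qed
  then show ?thesis
    by (simp add: polytabloid_eq)
qed

end

lemma rho_polytabloid_of:
  "finite \<Omega> \<Longrightarrow> g permutes \<Omega> \<Longrightarrow> t \<in> tableaux2 \<Omega> s
    \<Longrightarrow> rho g (polytabloid_of s t) = polytabloid_of s (map_tableau g t)"
  unfolding polytabloid_of_def map_tableau_def
  using two_column_tableau.rho_polytabloid tableaux2_iff by (metis fst_conv snd_conv)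

lemma polytabloid_of_in_specht2:
  "finite \<Omega> \<Longrightarrow> t \<in> tableaux2 \<Omega> s \<Longrightarrow> polytabloid_of s t \<in> specht2 \<Omega> s"
  unfolding specht2_eq_span_fn by (rule span_fn_mem[OF finite_tableaux2])

lemma polytabloid_of_in_L2r:
  assumes "finite \<Omega>" "t \<in> tableaux2 \<Omega> s"
  shows "polytabloid_of s t \<in> L2r \<Omega> s"
proof -
  interpret two_column_tableau \<Omega> s "fst t" "snd t"
    using tableaux2_iff assms by blast
  show ?thesis
    unfolding L2r_def polytabloid_of_def
    using transversal_subset_Omega card_transversal by (auto simp: polytabloid_eq)
qed

lemma subspace_fn_L2r: "subspace_fn (L2r \<Omega> r)"
proof (rule subspace_fnI)
  fix v w assume "v \<in> L2r \<Omega> r" "w \<in> L2r \<Omega> r"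
  moreover have "v x \<noteq> 0 \<or> w x \<noteq> 0" if "v x + w x \<noteq> 0" for x
    using that by auto
  ultimately show "(\<lambda>x. v x + w x) \<in> L2r \<Omega> r"
    unfolding L2r_def by blast
qed (auto simp: L2r_def)

lemma specht2_subset_L2r: "finite \<Omega> \<Longrightarrow> specht2 \<Omega> s \<subseteq> L2r \<Omega> s"
  unfolding specht2_eq_span_fn
  by (rule span_fn_subset[OF subspace_fn_L2r]) (rule polytabloid_of_in_L2r)

lemma invariant_specht2:
  assumes fin: "finite \<Omega>"
  shows "invariant \<Omega> (specht2 \<Omega> s)"
  unfolding invariant_def
proof (intro ballI)
  fix g v assume g: "g \<in> Sym \<Omega>" and v: "v \<in> specht2 \<Omega> s"
  have gp: "g permutes \<Omega>" "inv g permutes \<Omega>"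
    using g permutes_inv by auto
  obtain c where c: "v = (\<lambda>x. \<Sum>t\<in>tableaux2 \<Omega> s. c t * polytabloid_of s t x)"
    using v unfolding specht2_eq_span_fn span_fn_def by auto
  have "rho g v = (\<lambda>x. \<Sum>t\<in>tableaux2 \<Omega> s. c t * polytabloid_of s (map_tableau g t) x)"
    unfolding c using rho_polytabloid_of[OF fin gp(1)] by (auto simp: rho_def fun_eq_iff)
  also have "\<dots> = (\<lambda>x. \<Sum>t\<in>tableaux2 \<Omega> s. c (map_tableau (inv g) t) * polytabloid_of s t x)"
    by (rule ext, rule sum.reindex_bij_witness[where i="map_tableau (inv g)" and j="map_tableau g"])
      (auto simp: map_tableau_inv_map_tableau[OF gp(1)] map_tableau_map_tableau_inv[OF gp(1)] map_tableau_in_tableaux2 gp)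
  finally show "rho g v \<in> specht2 \<Omega> s"
    unfolding specht2_eq_span_fn span_fn_def
    by (intro CollectI exI[of _ "\<lambda>t. c (map_tableau (inv g) t)"]) simp
qed

lemma specht2_has_nonzero_inner:
  assumes fin: "finite \<Omega>" and u: "u \<in> specht2 \<Omega> s" "u \<noteq> (\<lambda>x. 0)"
  obtains t where "t \<in> tableaux2 \<Omega> s" "inner_L2 \<Omega> u (polytabloid_of s t) \<noteq> 0"
proof -
  obtain c where c: "u = (\<lambda>x. \<Sum>t\<in>tableaux2 \<Omega> s. c t * polytabloid_of s t x)"
    using u unfolding specht2_eq_span_fn span_fn_def by auto
  have "\<exists>t\<in>tableaux2 \<Omega> s. inner_L2 \<Omega> u (polytabloid_of s t) \<noteq> 0"
  proof (rule ccontr)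
    assume "\<not> ?thesis"
    then have "inner_L2 \<Omega> u u = 0"
      by (subst (2) c) (simp add: inner_L2_sum_right)
    then have "u y = 0" for y
      using inner_L2_self_eq_0D[OF fin] specht2_subset_L2r[OF fin] u(1) unfolding L2r_def
      by blast
    then show False
      using u(2) by auto
  qed
  then show ?thesis
    using that by blast
qed

text \<open>The column antisymmetrizer maps \<open>u\<close> to a nonzero multiple of the polytabloid.\<close>
lemma polytabloid_of_in_invariant_subspace:
  assumes fin: "finite \<Omega>" and W: "subspace_fn W" "invariant \<Omega> W"
    and u: "u \<in> W" "u \<in> L2r \<Omega> s" and t: "t \<in> tableaux2 \<Omega> s"
    and ne: "inner_L2 \<Omega> u (polytabloid_of s t) \<noteq> 0"
  shows "polytabloid_of s t \<in> W"
proof -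
  interpret t: two_column_tableau \<Omega> s "fst t" "snd t"
    using tableaux2_iff[OF fin] t by blast
  let ?e = "polytabloid_of s t" and ?c = "inner_L2 \<Omega> u (polytabloid_of s t)"
  have "(\<lambda>x. \<Sum>J\<in>Pow {..<s}. (-1) ^ card J * rho (column_swap s (fst t) (snd t) J) u x) \<in> W"
    by (rule subspace_fn_sum[OF W(1)])
      (use invariantD[OF W(2) _ u(1)] t.column_swap_permutes in simp)
  then have "(\<lambda>x. ?c * ?e x) \<in> W"
    using t.column_antisymmetrizer[OF u(2)] by (simp add: t.rho_column_swap polytabloid_of_def)
  then have "(\<lambda>x. inverse ?c * (?c * ?e x)) \<in> W"
    by (rule subspace_fn_scale[OF W(1)])
  moreover have "(\<lambda>x. inverse ?c * (?c * ?e x)) = ?e"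
    using ne by (simp add: fun_eq_iff)
  ultimately show ?thesis
    by simp
qed

lemma irreducible_specht2:
  assumes fin: "finite \<Omega>" and n: "2 * s \<le> card \<Omega>"
  shows "irreducible_sub \<Omega> (specht2 \<Omega> s)"
proof (rule irreducible_subI[OF subspace_fn_specht2 invariant_specht2[OF fin]])
  obtain t0 where t0: "t0 \<in> tableaux2 \<Omega> s"
    using tableaux2_nonempty[OF fin n] .
  interpret t0: two_column_tableau \<Omega> s "fst t0" "snd t0"
    using tableaux2_iff[OF fin] t0 by blast
  show "specht2 \<Omega> s \<noteq> {\<lambda>x. 0}"
    using polytabloid_of_in_specht2[OF fin t0] t0.polytabloid_nonzero
    unfolding polytabloid_of_def by auto
  fix W assume W: "subspace_fn W" "invariant \<Omega> W" "W \<subseteq> specht2 \<Omega> s"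
  show "W = {\<lambda>x. 0} \<or> W = specht2 \<Omega> s"
  proof (cases "W \<subseteq> {\<lambda>x. 0}")
    case True
    then show ?thesis
      using subspace_fn_zero[OF W(1)] by blast
  next
    case False
    then obtain u where u: "u \<in> W" "u \<noteq> (\<lambda>x. 0)"
      by blast
    then have uS: "u \<in> specht2 \<Omega> s"
      using W(3) by blast
    then obtain t where t: "t \<in> tableaux2 \<Omega> s" and ne: "inner_L2 \<Omega> u (polytabloid_of s t) \<noteq> 0"
      using specht2_has_nonzero_inner[OF fin _ u(2)] by blast
    have eW: "polytabloid_of s t \<in> W"
      using polytabloid_of_in_invariant_subspace[OF fin W(1,2) u(1) _ t ne] uS
        specht2_subset_L2r[OF fin] by blast
    have "polytabloid_of s t' \<in> W" if t': "t' \<in> tableaux2 \<Omega> s" for t'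
    proof -
      obtain g where "g permutes \<Omega>" "map_tableau g t = t'"
        using tableaux2_transitive[OF t t'] .
      then show ?thesis
        using invariantD[OF W(2) _ eW] rho_polytabloid_of[OF fin _ t] by auto
    qed
    then have "specht2 \<Omega> s \<subseteq> W"
      unfolding specht2_eq_span_fn by (rule span_fn_subset[OF W(1)])
    then show ?thesis
      using W(3) by blast
  qed
qed

lemma specht2_sum_insert_eq_0:
  assumes fin: "finite \<Omega>" and "1 \<le> s" "h \<in> specht2 \<Omega> s" "y \<subseteq> \<Omega>" "card y = s - 1"
  shows "(\<Sum>z\<in>\<Omega> - y. h (insert z y)) = 0"
proof -
  obtain c where c: "h = (\<lambda>x. \<Sum>t\<in>tableaux2 \<Omega> s. c t * polytabloid_of s t x)"
    using assms(3) unfolding specht2_eq_span_fn span_fn_def by blast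
  have "(\<Sum>z\<in>\<Omega> - y. polytabloid_of s t (insert z y)) = 0" if "t \<in> tableaux2 \<Omega> s" for t
    using two_column_tableau.sum_polytabloid_insert_eq_0[OF _ assms(2,4,5)] tableaux2_iff[OF fin] that
    unfolding polytabloid_of_def by blast
  moreover have "(\<Sum>z\<in>\<Omega> - y. h (insert z y))
      = (\<Sum>t\<in>tableaux2 \<Omega> s. c t * (\<Sum>z\<in>\<Omega> - y. polytabloid_of s t (insert z y)))"
    unfolding c by (simp add: sum_distrib_left sum.swap[of _ "\<Omega> - y"])
  ultimately show ?thesis
    by simp
qed

section \<open>The up map and the components of \<open>L2r \<Omega> r\<close>\<close>

definition up_map :: "'a set \<Rightarrow> nat \<Rightarrow> nat \<Rightarrow> 'a fn \<Rightarrow> 'a fn" where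
  "up_map \<Omega> r s f = (\<lambda>x. if x \<subseteq> \<Omega> \<and> card x = r then (\<Sum>y\<in>{y. y \<subseteq> x \<and> card y = s}. f y) else 0)"

lemma up_map_in_L2r: "up_map \<Omega> r s f \<in> L2r \<Omega> r"
  unfolding up_map_def L2r_def by auto

lemma up_map_sum:
  "up_map \<Omega> r s (\<lambda>x. \<Sum>i\<in>I. c i * v i x) = (\<lambda>x. \<Sum>i\<in>I. c i * up_map \<Omega> r s (v i) x)"
proof
  fix x
  show "up_map \<Omega> r s (\<lambda>x. \<Sum>i\<in>I. c i * v i x) x = (\<Sum>i\<in>I. c i * up_map \<Omega> r s (v i) x)"
  proof (cases "x \<subseteq> \<Omega> \<and> card x = r")
    case True
    then show ?thesis
      unfolding up_map_def by (simp add: sum_distrib_left sum.swap[of _ I])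
  next
    case False
    then show ?thesis
      unfolding up_map_def if_not_P[OF False] by simp
  qed
qed

lemma linear_on_up_map: "linear_on V (up_map \<Omega> r s)"
  unfolding linear_on_def up_map_def by (auto simp: sum.distrib sum_distrib_left)

lemma up_map_eq_self:
  assumes "finite \<Omega>" "f \<in> L2r \<Omega> s"
  shows "up_map \<Omega> s s f = f"
proof
  fix x
  show "up_map \<Omega> s s f x = f x"
  proof (cases "x \<subseteq> \<Omega> \<and> card x = s")
    case True
    then have "finite x"
      using assms(1) finite_subset by blast
    then have "y = x" if "y \<subseteq> x" "card y = s" for y
      using card_subset_eq that True by metis
    then have "{y. y \<subseteq> x \<and> card y = s} = {x}"
      using True by auto
    then show ?thesis
      unfolding up_map_def using True by simp
  next
    case False
    then show ?thesis
      unfolding up_map_def using L2r_eq_0[OF assms(2) False] False by auto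
  qed
qed

lemma permutes_vimage_subset_iff: "g permutes \<Omega> \<Longrightarrow> g -` x \<subseteq> \<Omega> \<longleftrightarrow> x \<subseteq> \<Omega>"
  using bij_vimage_subset_iff[OF permutes_bij, of g \<Omega> x \<Omega>] permutes_image[of g \<Omega>] by simp

lemma card_vimage_bij: "bij g \<Longrightarrow> card (g -` y) = card y"
  by (simp add: bij_is_inj bij_is_surj card_vimage_inj)

lemma equivariant_on_up_map: "equivariant_on \<Omega> V (up_map \<Omega> r s)"
  unfolding equivariant_on_def
proof (intro ballI ext)
  fix g and f :: "'a fn" and x assume "g \<in> Sym \<Omega>"
  then have g: "g permutes \<Omega>" "bij g"
    using permutes_bij by auto
  have "(\<Sum>y\<in>{y. y \<subseteq> x \<and> card y = s}. f (g -` y)) = (\<Sum>y\<in>{y. y \<subseteq> g -` x \<and> card y = s}. f y)"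
  proof (rule sum.reindex_bij_witness[where i="\<lambda>y. g ` y" and j="\<lambda>y. g -` y"])
    fix y assume "y \<in> {y. y \<subseteq> g -` x \<and> card y = s}"
    then show "g -` g ` y = y" "g ` y \<in> {y. y \<subseteq> x \<and> card y = s}"
      using g(2) card_image[OF inj_on_subset[OF bij_is_inj[OF g(2)] subset_UNIV]]
      by (auto simp: bij_is_inj inj_vimage_image_eq)
  qed (use g(2) in \<open>auto simp: bij_is_surj surj_image_vimage_eq card_vimage_bij\<close>)
  then show "up_map \<Omega> r s (rho g f) x = rho g (up_map \<Omega> r s f) x"
    unfolding up_map_def rho_permutes[OF g(1)]
    by (simp add: permutes_vimage_subset_iff[OF g(1)] card_vimage_bij[OF g(2)])
qed

context two_column_tableau
begin

lemma sum_polytabloid_subsets_eq_0: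
  assumes i: "i < s" "a!i \<in> x \<longleftrightarrow> b!i \<in> x"
  shows "(\<Sum>y\<in>{y. y \<subseteq> x \<and> card y = s}. polytabloid s a b y) = 0"
proof (cases "a!i \<in> x")
  case True
  let ?h = "column_swap s a b {i}"
  show ?thesis
  proof (rule sum_eq_0_sign_reversing_involution[where h="image ?h"])
    fix y assume y: "y \<in> {y. y \<subseteq> x \<and> card y = s}"
    have "?h ` y \<subseteq> ?h ` x"
      using y by (intro image_mono) simp
    then have "?h ` y \<subseteq> x"
      unfolding column_swap_singleton_fixes[OF i] .
    then show "?h ` y \<in> {y. y \<subseteq> x \<and> card y = s}"
      using y by (simp add: card_column_swap_image)
    show "?h ` ?h ` y = y"
      by (simp add: image_image column_swap_involution)
    show "polytabloid s a b (?h ` y) = - polytabloid s a b y"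
      using polytabloid_column_swap[of "{i}" y] i by simp
  qed
next
  case False
  then have "\<not> transversal s a b y" if "y \<subseteq> x" for y
    using i that unfolding transversal_def by auto
  then show ?thesis
    by (simp add: polytabloid_eq)
qed

lemma transversal_subset_eq:
  assumes xor: "\<forall>i<s. a!i \<in> x \<longleftrightarrow> b!i \<notin> x" and y: "y \<subseteq> x" "transversal s a b y"
  shows "y = x \<inter> entries"
proof
  show "y \<subseteq> x \<inter> entries"
    using y unfolding transversal_def by auto
  show "x \<inter> entries \<subseteq> y"
  proof
    fix z assume z: "z \<in> x \<inter> entries"
    then have "z \<in> entries"
      by blast
    then show "z \<in> y"
      by (cases rule: entries_cases) (use z y xor in \<open>auto simp: transversal_def\<close>)
  qed
qed

lemma sum_polytabloid_subsets_transversal: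
  assumes xor: "\<forall>i<s. a!i \<in> x \<longleftrightarrow> b!i \<notin> x" and fin: "finite x"
  shows "(\<Sum>y\<in>{y. y \<subseteq> x \<and> card y = s}. polytabloid s a b y) = polytabloid s a b (x \<inter> entries)"
proof -
  have tr: "transversal s a b (x \<inter> entries)"
    unfolding transversal_def using xor a_in_entries b_in_entries by auto
  have "polytabloid s a b y = (if y = x \<inter> entries then polytabloid s a b y else 0)"
    if "y \<subseteq> x" for y
  proof (cases "transversal s a b y")
    case True
    then have "y = x \<inter> entries"
      by (rule transversal_subset_eq[OF xor that])
    then show ?thesis
      by simp
  qed (auto simp: polytabloid_eq)
  then have "(\<Sum>y\<in>{y. y \<subseteq> x \<and> card y = s}. polytabloid s a b y)
      = (\<Sum>y\<in>{y. y \<subseteq> x \<and> card y = s}. if y = x \<inter> entries then polytabloid s a b y else 0)"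
    by (intro sum.cong) auto
  also have "\<dots> = polytabloid s a b (x \<inter> entries)"
    using fin card_transversal[OF tr] by simp
  finally show ?thesis .
qed

lemma up_map_polytabloid:
  assumes x: "x \<subseteq> \<Omega>" "card x = r"
  shows "up_map \<Omega> r s (polytabloid s a b) x = polytabloid s a b (x \<inter> entries)"
proof -
  have fin: "finite x"
    using x finite_Omega finite_subset by blast
  have "(\<Sum>y\<in>{y. y \<subseteq> x \<and> card y = s}. polytabloid s a b y) = polytabloid s a b (x \<inter> entries)"
  proof (cases "\<exists>i<s. a!i \<in> x \<longleftrightarrow> b!i \<in> x")
    case True
    then obtain i where i: "i < s" "a!i \<in> x \<longleftrightarrow> b!i \<in> x"
      by blast
    then have "\<not> transversal s a b (x \<inter> entries)"
      unfolding transversal_def using a_in_entries b_in_entries by auto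
    then show ?thesis
      using sum_polytabloid_subsets_eq_0[OF i] by (simp add: polytabloid_eq)
  next
    case False
    then show ?thesis
      using sum_polytabloid_subsets_transversal[OF _ fin] by blast
  qed
  then show ?thesis
    unfolding up_map_def using x by simp
qed

lemma exists_complement_subset:
  assumes "s \<le> r" "r + s \<le> card \<Omega>"
  obtains z where "z \<subseteq> \<Omega> - entries" "card z = r - s"
proof -
  have "card (\<Omega> - entries) = card \<Omega> - 2 * s"
    using card_entries entries_subset finite_Omega by (simp add: card_Diff_subset finite_subset)
  then have "r - s \<le> card (\<Omega> - entries)"
    using assms by linarith
  then obtain z where "z \<subseteq> \<Omega> - entries" "card z = r - s"
    by (rule obtain_subset_with_card_n)
  then show ?thesis
    by (rule that)
qed

lemma up_map_polytabloid_nonzero: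
  assumes "s \<le> r" "r + s \<le> card \<Omega>"
  shows "up_map \<Omega> r s (polytabloid s a b) \<noteq> (\<lambda>x. 0)"
proof -
  obtain z where z: "z \<subseteq> \<Omega> - entries" "card z = r - s"
    using exists_complement_subset[OF assms] .
  define x where "x = swapped_row s a b {} \<union> z"
  have fz: "finite z"
    using z finite_Omega finite_subset by blast
  have "x \<inter> entries = swapped_row s a b {}"
    unfolding x_def using z swapped_row_subset[of "{}"] by auto
  moreover have "card x = r"
    unfolding x_def using z fz swapped_row_subset[of "{}"] card_swapped_row[of "{}"] assms(1)
    by (subst card_Un_disjoint) (auto intro: finite_subset[OF _ finite_subset[OF entries_subset finite_Omega]])
  moreover have "x \<subseteq> \<Omega>"
    unfolding x_def using z swapped_row_subset[of "{}"] entries_subset by auto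
  ultimately have "up_map \<Omega> r s (polytabloid s a b) x = 1"
    using up_map_polytabloid polytabloid_swapped_row[of "{}"] by simp
  then show ?thesis
    by (metis zero_neq_one)
qed

lemma exists_permutes_fixing_entries:
  assumes z0: "z0 \<subseteq> \<Omega> - entries" and z: "z \<subseteq> \<Omega> - entries" and card: "card z0 = card z"
  obtains \<pi> where "\<pi> permutes \<Omega>" "\<forall>w\<in>entries. \<pi> w = w" "\<pi> ` z0 = z"
proof -
  have "finite z0" "finite z"
    using z0 z finite_Omega by (metis Diff_subset finite_subset subset_trans)+
  then obtain zs0 zs where zs0: "set zs0 = z0" "distinct zs0" and zs: "set zs = z" "distinct zs"
    using finite_distinct_list by metis
  have "length zs0 = length zs"
    using zs0 zs card distinct_card by metis
  moreover have "distinct ((a @ b) @ zs0)" "distinct ((a @ b) @ zs)"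
    using distinct_ab zs0 zs z0 z by auto
  moreover have "set ((a @ b) @ zs0) \<subseteq> \<Omega>" "set ((a @ b) @ zs) \<subseteq> \<Omega>"
    using set_ab_subset zs0 zs z0 z by auto
  ultimately obtain \<pi> where \<pi>: "\<pi> permutes \<Omega>" "map \<pi> ((a @ b) @ zs0) = (a @ b) @ zs"
    using exists_permutes_map[of "(a @ b) @ zs0" "(a @ b) @ zs" \<Omega>] by auto
  then have "map \<pi> (a @ b) @ map \<pi> zs0 = (a @ b) @ zs"
    by (simp only: map_append)
  then have ab: "map \<pi> (a @ b) = a @ b" and "map \<pi> zs0 = zs"
    using append_eq_append_conv[of "map \<pi> (a @ b)" "a @ b" "map \<pi> zs0" zs] by auto
  have "\<pi> w = w" if "w \<in> entries" for w
    using ab that by (metis map_eq_conv map_ident set_append)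
  moreover have "\<pi> ` z0 = z"
    using \<open>map \<pi> zs0 = zs\<close> zs0 zs by (metis list.set_map)
  ultimately show ?thesis
    using that \<pi>(1) by blast
qed

lemma eq_0_if_column_sign:
  assumes column_sign: "\<And>J. J \<subseteq> {..<s} \<Longrightarrow> rho (column_swap s a b J) G = (\<lambda>x. (-1) ^ card J * G x)"
    and i: "i < s" "a!i \<in> x \<longleftrightarrow> b!i \<in> x"
  shows "G x = 0"
proof -
  have "G x = - G x"
    using fun_cong[OF column_sign[of "{i}"], of x] column_swap_singleton_fixes[OF i] i
    by (simp add: rho_column_swap)
  then show ?thesis
    by simp
qed

lemma eq_swapped_row_if_column_sign_row_fixed:
  assumes column_sign: "\<And>J. J \<subseteq> {..<s} \<Longrightarrow> rho (column_swap s a b J) G = (\<lambda>x. (-1) ^ card J * G x)"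
    and row_fixed: "\<And>\<pi>. \<pi> permutes \<Omega> \<Longrightarrow> \<forall>w\<in>entries. \<pi> w = w \<Longrightarrow> rho \<pi> G = G"
    and x: "x \<subseteq> \<Omega>" and K: "K \<subseteq> {..<s}" "x \<inter> entries = swapped_row s a b K"
    and z0: "z0 \<subseteq> \<Omega> - entries" "card z0 = card (x - entries)"
  shows "G x = (-1) ^ card K * G (swapped_row s a b {} \<union> z0)"
proof -
  define z where "z = x - entries"
  have "z \<subseteq> \<Omega> - entries"
    unfolding z_def using x by blast
  moreover have "card z0 = card z"
    unfolding z_def by (rule z0(2))
  ultimately obtain \<pi> where \<pi>: "\<pi> permutes \<Omega>" "\<forall>w\<in>entries. \<pi> w = w" "\<pi> ` z0 = z"
    by (rule exists_permutes_fixing_entries[OF z0(1)])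
  have "column_swap s a b K ` z = id ` z"
    unfolding z_def using column_swap_other by (intro image_cong) auto
  moreover have "x = swapped_row s a b K \<union> z"
    unfolding z_def using K(2) by blast
  ultimately have "column_swap s a b K ` (swapped_row s a b {} \<union> z) = x"
    using column_swap_swapped_row[of "{}" K] K(1) by (simp add: image_Un)
  then have Gx: "G x = (-1) ^ card K * G (swapped_row s a b {} \<union> z)"
    using fun_cong[OF column_sign[OF K(1)], of "swapped_row s a b {} \<union> z"]
    by (simp add: rho_column_swap)
  have "\<pi> ` swapped_row s a b {} = id ` swapped_row s a b {}"
    using \<pi>(2) swapped_row_subset[of "{}"] by (intro image_cong) auto
  then have "\<pi> ` (swapped_row s a b {} \<union> z0) = swapped_row s a b {} \<union> z"
    using \<pi>(3) by (simp add: image_Un)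
  then have "\<pi> -` (swapped_row s a b {} \<union> z) = swapped_row s a b {} \<union> z0"
    using permutes_inj[OF \<pi>(1)] by (metis inj_vimage_image_eq)
  then have "G (swapped_row s a b {} \<union> z) = G (swapped_row s a b {} \<union> z0)"
    using fun_cong[OF row_fixed[OF \<pi>(1,2)], of "swapped_row s a b {} \<union> z"]
    unfolding rho_permutes[OF \<pi>(1)] by simp
  then show ?thesis
    using Gx by simp
qed

text \<open>The sign conditions force \<open>G\<close> to vanish on \<open>r\<close>-sets containing both or neither entry of
  some column, and a column swap followed by a permutation fixing the entries moves every other
  \<open>r\<close>-set to one fixed \<open>r\<close>-set.\<close>
lemma eq_scaled_up_map_polytabloid:
  assumes r: "s \<le> r" "r + s \<le> card \<Omega>" and G: "G \<in> L2r \<Omega> r"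
    and column_sign: "\<And>J. J \<subseteq> {..<s} \<Longrightarrow> rho (column_swap s a b J) G = (\<lambda>x. (-1) ^ card J * G x)"
    and row_fixed: "\<And>\<pi>. \<pi> permutes \<Omega> \<Longrightarrow> \<forall>w\<in>entries. \<pi> w = w \<Longrightarrow> rho \<pi> G = G"
  obtains c where "G = (\<lambda>x. c * up_map \<Omega> r s (polytabloid s a b) x)"
proof -
  obtain z0 where z0: "z0 \<subseteq> \<Omega> - entries" "card z0 = r - s"
    using exists_complement_subset[OF r] .
  have "G x = G (swapped_row s a b {} \<union> z0) * up_map \<Omega> r s (polytabloid s a b) x" for x
  proof (cases "x \<subseteq> \<Omega> \<and> card x = r")
    case False
    then show ?thesis
      unfolding up_map_def if_not_P[OF False] using L2r_eq_0[OF G False] by simp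
  next
    case x: True
    show ?thesis
    proof (cases "\<exists>i<s. a!i \<in> x \<longleftrightarrow> b!i \<in> x")
      case True
      then obtain i where i: "i < s" "a!i \<in> x \<longleftrightarrow> b!i \<in> x"
        by blast
      then have "\<not> transversal s a b (x \<inter> entries)"
        using a_in_entries b_in_entries unfolding transversal_def by auto
      then have "up_map \<Omega> r s (polytabloid s a b) x = 0"
        using up_map_polytabloid[of x r] x by (simp add: polytabloid_eq)
      then show ?thesis
        using eq_0_if_column_sign[OF column_sign i] by simp
    next
      case False
      then have "transversal s a b (x \<inter> entries)"
        unfolding transversal_def using a_in_entries b_in_entries by auto
      then obtain K where K: "K \<subseteq> {..<s}" "x \<inter> entries = swapped_row s a b K"
        by (rule transversalE)
      have "finite x"
        using x finite_Omega finite_subset by blast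
      then have "card (x - entries) = r - s"
        using x card_Int_Diff[of x entries] card_swapped_row[OF K(1)] K(2) by auto
      then have "card z0 = card (x - entries)"
        using z0(2) by simp
      then have "G x = (-1) ^ card K * G (swapped_row s a b {} \<union> z0)"
        using eq_swapped_row_if_column_sign_row_fixed[OF column_sign row_fixed _ K z0(1)] x
        by blast
      moreover have "up_map \<Omega> r s (polytabloid s a b) x = (-1) ^ card K"
        using up_map_polytabloid[of x r] x K polytabloid_swapped_row by simp
      ultimately show ?thesis
        by simp
    qed
  qed
  then show ?thesis
    using that by blast
qed

end

lemma exists_polytabloid_of_up_map_nonzero:
  assumes fin: "finite \<Omega>" and r: "s \<le> r" "r + s \<le> card \<Omega>"
  shows "\<exists>v\<in>specht2 \<Omega> s. up_map \<Omega> r s v \<noteq> (\<lambda>x. 0)"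
proof -
  have "2 * s \<le> card \<Omega>"
    using r by simp
  then obtain t where t: "t \<in> tableaux2 \<Omega> s"
    by (rule tableaux2_nonempty[OF fin])
  interpret two_column_tableau \<Omega> s "fst t" "snd t"
    using tableaux2_iff[OF fin] t by blast
  show ?thesis
    using polytabloid_of_in_specht2[OF fin t] up_map_polytabloid_nonzero[OF r]
    unfolding polytabloid_of_def by blast
qed

lemma inj_on_up_map_specht2:
  assumes fin: "finite \<Omega>" and r: "s \<le> r" "r + s \<le> card \<Omega>"
  shows "inj_on (up_map \<Omega> r s) (specht2 \<Omega> s)"
  using r
  by (intro inj_on_irreducible[OF irreducible_specht2[OF fin] linear_on_up_map equivariant_on_up_map]
      exists_polytabloid_of_up_map_nonzero[OF fin r]) simp

lemma irreducible_up_map_specht2: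
  assumes fin: "finite \<Omega>" and r: "s \<le> r" "r + s \<le> card \<Omega>"
  shows "irreducible_sub \<Omega> (up_map \<Omega> r s ` specht2 \<Omega> s)"
  using r
  by (intro irreducible_sub_image[OF irreducible_specht2[OF fin] linear_on_up_map equivariant_on_up_map
      inj_on_up_map_specht2[OF fin r]]) simp

lemma rep_iso_up_map_specht2:
  assumes fin: "finite \<Omega>" and r: "s \<le> r" "r + s \<le> card \<Omega>"
  shows "rep_iso \<Omega> (up_map \<Omega> r s ` specht2 \<Omega> s) (specht2 \<Omega> s)"
  by (rule rep_iso_image[OF subspace_fn_specht2 invariant_specht2[OF fin] linear_on_up_map
      equivariant_on_up_map inj_on_up_map_specht2[OF fin r]])

lemma equivariant_image_polytabloid_of:
  assumes fin: "finite \<Omega>" and r: "s \<le> r" "r + s \<le> card \<Omega>"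
    and \<theta>: "linear_on (specht2 \<Omega> s) \<theta>" "equivariant_on \<Omega> (specht2 \<Omega> s) \<theta>"
      "\<theta> ` specht2 \<Omega> s \<subseteq> L2r \<Omega> r"
    and t: "t \<in> tableaux2 \<Omega> s"
  obtains c where "\<theta> (polytabloid_of s t) = (\<lambda>x. c * up_map \<Omega> r s (polytabloid_of s t) x)"
proof -
  interpret two_column_tableau \<Omega> s "fst t" "snd t"
    using tableaux2_iff[OF fin] t by blast
  let ?e = "polytabloid_of s t"
  have e: "?e \<in> specht2 \<Omega> s"
    by (rule polytabloid_of_in_specht2[OF fin t])
  have "rho (column_swap s (fst t) (snd t) J) (\<theta> ?e) = (\<lambda>x. (-1) ^ card J * \<theta> ?e x)"
    if "J \<subseteq> {..<s}" for J
  proof -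
    have "rho (column_swap s (fst t) (snd t) J) ?e = (\<lambda>x. (-1) ^ card J * ?e x)"
      unfolding rho_column_swap polytabloid_of_def using polytabloid_column_swap[OF that] by simp
    then have "\<theta> (rho (column_swap s (fst t) (snd t) J) ?e) = (\<lambda>x. (-1) ^ card J * \<theta> ?e x)"
      using linear_on_scale[OF \<theta>(1) e] by simp
    then show ?thesis
      using equivariant_onD[OF \<theta>(2) _ e] column_swap_permutes by simp
  qed
  moreover have "rho \<pi> (\<theta> ?e) = \<theta> ?e" if "\<pi> permutes \<Omega>" "\<forall>w\<in>entries. \<pi> w = w" for \<pi>
  proof -
    have "map \<pi> (fst t) = fst t" "map \<pi> (snd t) = snd t"
      using that(2) by (auto intro: map_idI)
    then have "rho \<pi> ?e = ?e"
      using rho_polytabloid[OF that(1)] unfolding polytabloid_of_def by simp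
    moreover have "\<theta> (rho \<pi> ?e) = rho \<pi> (\<theta> ?e)"
      using equivariant_onD[OF \<theta>(2) _ e, of \<pi>] that(1) by simp
    ultimately show ?thesis
      by simp
  qed
  ultimately show ?thesis
    using eq_scaled_up_map_polytabloid[OF r, of "\<theta> ?e"] \<theta>(3) e that
    unfolding polytabloid_of_def by blast
qed

lemma up_map_span_fn: "up_map \<Omega> r s ` span_fn I v = span_fn I (\<lambda>i. up_map \<Omega> r s (v i))"
proof
  show "up_map \<Omega> r s ` span_fn I v \<subseteq> span_fn I (\<lambda>i. up_map \<Omega> r s (v i))"
    unfolding span_fn_def by (auto simp: up_map_sum)
  show "span_fn I (\<lambda>i. up_map \<Omega> r s (v i)) \<subseteq> up_map \<Omega> r s ` span_fn I v"
  proof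
    fix w assume "w \<in> span_fn I (\<lambda>i. up_map \<Omega> r s (v i))"
    then obtain c where "w = (\<lambda>x. \<Sum>i\<in>I. c i * up_map \<Omega> r s (v i) x)"
      unfolding span_fn_def by auto
    then have "w = up_map \<Omega> r s (\<lambda>x. \<Sum>i\<in>I. c i * v i x)"
      by (simp add: up_map_sum)
    moreover have "(\<lambda>x. \<Sum>i\<in>I. c i * v i x) \<in> span_fn I v"
      unfolding span_fn_def by auto
    ultimately show "w \<in> up_map \<Omega> r s ` span_fn I v"
      by blast
  qed
qed

lemma image_specht2_subset_up_map:
  assumes fin: "finite \<Omega>" and \<theta>: "linear_on (specht2 \<Omega> s) \<theta>"
    and c: "\<And>t. t \<in> tableaux2 \<Omega> s
      \<Longrightarrow> \<theta> (polytabloid_of s t) = (\<lambda>x. c t * up_map \<Omega> r s (polytabloid_of s t) x)"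
  shows "\<theta> ` specht2 \<Omega> s \<subseteq> up_map \<Omega> r s ` specht2 \<Omega> s"
proof
  fix v assume "v \<in> \<theta> ` specht2 \<Omega> s"
  then obtain w where w: "w \<in> specht2 \<Omega> s" "v = \<theta> w"
    by blast
  then obtain d where d: "w = (\<lambda>x. \<Sum>t\<in>tableaux2 \<Omega> s. d t * polytabloid_of s t x)"
    unfolding specht2_eq_span_fn span_fn_def by blast
  have "v = (\<lambda>x. \<Sum>t\<in>tableaux2 \<Omega> s. d t * \<theta> (polytabloid_of s t) x)"
    unfolding w(2) d
    by (rule linear_on_sum[OF \<theta> subspace_fn_specht2 finite_tableaux2[OF fin]
        polytabloid_of_in_specht2[OF fin]])
  also have "\<dots> = (\<lambda>x. \<Sum>t\<in>tableaux2 \<Omega> s. (d t * c t) * up_map \<Omega> r s (polytabloid_of s t) x)"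
    using c by (simp add: mult.assoc)
  also have "\<dots> = up_map \<Omega> r s (\<lambda>x. \<Sum>t\<in>tableaux2 \<Omega> s. (d t * c t) * polytabloid_of s t x)"
    by (rule up_map_sum[symmetric])
  finally have v: "v = up_map \<Omega> r s (\<lambda>x. \<Sum>t\<in>tableaux2 \<Omega> s. (d t * c t) * polytabloid_of s t x)" .
  have "(\<lambda>x. \<Sum>t\<in>tableaux2 \<Omega> s. (d t * c t) * polytabloid_of s t x) \<in> specht2 \<Omega> s"
    unfolding specht2_eq_span_fn span_fn_def by (intro CollectI exI[of _ "\<lambda>t. d t * c t"]) simp
  then show "v \<in> up_map \<Omega> r s ` specht2 \<Omega> s"
    unfolding v by (rule imageI)
qed

text \<open>Schur's lemma: any copy of the Specht module inside \<open>L2r \<Omega> r\<close> is the image of the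
  Specht module under an equivariant map, which is determined on each polytabloid up to a
  scalar.\<close>
lemma eq_up_map_specht2_if_rep_iso:
  assumes fin: "finite \<Omega>" and r: "s \<le> r" "r + s \<le> card \<Omega>"
    and V: "V \<subseteq> L2r \<Omega> r" "irreducible_sub \<Omega> V" "rep_iso \<Omega> V (specht2 \<Omega> s)"
  shows "V = up_map \<Omega> r s ` specht2 \<Omega> s"
proof -
  obtain \<theta> where \<theta>: "bij_betw \<theta> (specht2 \<Omega> s) V" "linear_on (specht2 \<Omega> s) \<theta>"
      "equivariant_on \<Omega> (specht2 \<Omega> s) \<theta>"
    using rep_iso_inverse[OF V(3) irreducible_sub_subspace[OF V(2)] irreducible_sub_invariant[OF V(2)]] .
  then have \<theta>_image: "\<theta> ` specht2 \<Omega> s = V"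
    by (simp add: bij_betw_def)
  have "\<exists>c. \<theta> (polytabloid_of s t) = (\<lambda>x. c * up_map \<Omega> r s (polytabloid_of s t) x)"
    if t: "t \<in> tableaux2 \<Omega> s" for t
  proof -
    have "\<theta> ` specht2 \<Omega> s \<subseteq> L2r \<Omega> r"
      using \<theta>_image V(1) by simp
    then obtain c where "\<theta> (polytabloid_of s t) = (\<lambda>x. c * up_map \<Omega> r s (polytabloid_of s t) x)"
      by (rule equivariant_image_polytabloid_of[OF fin r \<theta>(2,3) _ t])
    then show ?thesis
      by (rule exI)
  qed
  then obtain c where "\<And>t. t \<in> tableaux2 \<Omega> s
      \<Longrightarrow> \<theta> (polytabloid_of s t) = (\<lambda>x. c t * up_map \<Omega> r s (polytabloid_of s t) x)"
    by metis
  then have "V \<subseteq> up_map \<Omega> r s ` specht2 \<Omega> s"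
    using image_specht2_subset_up_map[OF fin \<theta>(2)] \<theta>_image by blast
  then have "V = {\<lambda>x. 0} \<or> V = up_map \<Omega> r s ` specht2 \<Omega> s"
    by (rule irreducible_sub_minimal[OF irreducible_up_map_specht2[OF fin r]
          irreducible_sub_subspace[OF V(2)] irreducible_sub_invariant[OF V(2)]])
  then show ?thesis
    using irreducible_sub_nontrivial[OF V(2)] by simp
qed

lemma L2comp_eq_up_map_specht2:
  assumes "finite \<Omega>" "s \<le> r" "r + s \<le> card \<Omega>"
  shows "L2comp \<Omega> r s = up_map \<Omega> r s ` specht2 \<Omega> s"
  unfolding L2comp_def
proof (rule the_equality)
  show "up_map \<Omega> r s ` specht2 \<Omega> s \<subseteq> L2r \<Omega> r \<and> irreducible_sub \<Omega> (up_map \<Omega> r s ` specht2 \<Omega> s)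
      \<and> rep_iso \<Omega> (up_map \<Omega> r s ` specht2 \<Omega> s) (specht2 \<Omega> s)"
    using up_map_in_L2r irreducible_up_map_specht2[OF assms] rep_iso_up_map_specht2[OF assms] by blast
next
  fix V assume "V \<subseteq> L2r \<Omega> r \<and> irreducible_sub \<Omega> V \<and> rep_iso \<Omega> V (specht2 \<Omega> s)"
  then show "V = up_map \<Omega> r s ` specht2 \<Omega> s"
    using eq_up_map_specht2_if_rep_iso[OF assms] by simp
qed

lemma L2comp_self_eq_specht2:
  assumes "finite \<Omega>" "2 * s \<le> card \<Omega>"
  shows "L2comp \<Omega> s s = specht2 \<Omega> s"
proof -
  have "up_map \<Omega> s s ` specht2 \<Omega> s = specht2 \<Omega> s"
    using up_map_eq_self[OF assms(1)] specht2_subset_L2r[OF assms(1)] by (simp add: subset_iff)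
  then show ?thesis
    using L2comp_eq_up_map_specht2[of \<Omega> s s] assms by simp
qed

section \<open>The kernel of \<open>\<Lambda>\<close>\<close>

lemma is_LambdaD:
  assumes "is_Lambda \<Omega> s r1 r2 \<Lambda>"
  shows is_Lambda_add: "\<phi> \<in> L2 \<Omega> \<Longrightarrow> \<psi> \<in> L2 \<Omega> \<Longrightarrow> \<Lambda> (\<lambda>x. \<phi> x + \<psi> x) = (\<lambda>x. \<Lambda> \<phi> x + \<Lambda> \<psi> x)"
    and is_Lambda_image: "\<Lambda> ` L2comp \<Omega> r1 s \<subseteq> L2comp \<Omega> r2 s"
    and is_Lambda_orthogonal:
      "\<psi> \<in> L2 \<Omega> \<Longrightarrow> (\<forall>\<phi>\<in>L2comp \<Omega> r1 s. inner_L2 \<Omega> \<psi> \<phi> = 0) \<Longrightarrow> \<Lambda> \<psi> = (\<lambda>x. 0)"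
  using assms unfolding is_Lambda_def by simp_all

lemma L2r_subset_L2: "L2r \<Omega> r \<subseteq> L2 \<Omega>"
  unfolding L2r_def L2_def by auto

lemma diff_in_L2:
  assumes "\<phi> \<in> L2 \<Omega>" "\<psi> \<in> L2 \<Omega>"
  shows "(\<lambda>x. \<phi> x - \<psi> x) \<in> L2 \<Omega>"
proof -
  have "\<phi> x \<noteq> 0 \<or> \<psi> x \<noteq> 0" if "\<phi> x - \<psi> x \<noteq> 0" for x
    using that by auto
  then show ?thesis
    using assms unfolding L2_def by blast
qed

text \<open>\<open>\<Lambda>\<close> factors through the orthogonal projection onto the finite-dimensional space
  \<open>L2comp \<Omega> r1 s\<close>.\<close>
lemma is_Lambda_in_L2comp:
  assumes fin: "finite \<Omega>" and r: "s \<le> r1" "r1 + s \<le> card \<Omega>"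
    and \<Lambda>: "is_Lambda \<Omega> s r1 r2 \<Lambda>" and \<psi>: "\<psi> \<in> L2 \<Omega>"
  shows "\<Lambda> \<psi> \<in> L2comp \<Omega> r2 s"
proof -
  let ?v = "\<lambda>t. up_map \<Omega> r1 s (polytabloid_of s t)"
  have comp: "L2comp \<Omega> r1 s = span_fn (tableaux2 \<Omega> s) ?v"
    unfolding L2comp_eq_up_map_specht2[OF fin r] specht2_eq_span_fn up_map_span_fn ..
  obtain p where p: "p \<in> span_fn (tableaux2 \<Omega> s) ?v"
    and orth: "\<forall>t\<in>tableaux2 \<Omega> s. inner_L2 \<Omega> (\<lambda>x. \<psi> x - p x) (?v t) = 0"
    using orthogonal_decomposition[OF fin finite_tableaux2[OF fin]] by blast
  have "span_fn (tableaux2 \<Omega> s) ?v \<subseteq> L2r \<Omega> r1"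
    by (rule span_fn_subset[OF subspace_fn_L2r up_map_in_L2r])
  then have pL: "p \<in> L2 \<Omega>"
    using p L2r_subset_L2 by blast
  have qL: "(\<lambda>x. \<psi> x - p x) \<in> L2 \<Omega>"
    by (rule diff_in_L2[OF \<psi> pL])
  have "\<Lambda> (\<lambda>x. \<psi> x - p x) = (\<lambda>x. 0)"
    using is_Lambda_orthogonal[OF \<Lambda> qL] inner_L2_span_fn_eq_0[OF orth] unfolding comp by blast
  then have "\<Lambda> \<psi> = \<Lambda> p"
    using is_Lambda_add[OF \<Lambda> pL qL] by simp
  then show ?thesis
    using is_Lambda_image[OF \<Lambda>] p unfolding comp by blast
qed

lemma is_kernel_indicator:
  assumes "is_kernel \<Omega> r1 r2 \<Lambda> lam" "finite \<Omega>" "x1 \<subseteq> \<Omega>" "card x1 = r1" "x2 \<subseteq> \<Omega>" "card x2 = r2"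
  shows "\<Lambda> (\<lambda>x. if x = x1 then 1 else 0) x2 = lam (card (x2 - x1))"
proof -
  have "(\<lambda>x. if x = x1 then 1 else 0) \<in> L2r \<Omega> r1"
    unfolding L2r_def using assms(3,4) by auto
  then have "\<Lambda> (\<lambda>x. if x = x1 then 1 else 0) x2
      = (\<Sum>x\<in>{x. x \<subseteq> \<Omega> \<and> card x = r1}. lam (card (x2 - x)) * (if x = x1 then 1 else 0))"
    using assms(1,5,6) unfolding is_kernel_def by blast
  also have "\<dots> = lam (card (x2 - x1))"
    using assms(2-4) by (simp add: if_distrib[of "\<lambda>c. _ * c"] cong: if_cong)
  finally show ?thesis .
qed

lemma sum_card_insert_diff:
  fixes f :: "nat \<Rightarrow> 'b::semiring_1"
  assumes fin: "finite \<Omega>" and "x1 \<subseteq> \<Omega>" "A \<subseteq> \<Omega> - x1" "B \<subseteq> x1"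
  shows "(\<Sum>z\<in>\<Omega> - (A \<union> B). f (card (insert z (A \<union> B) - x1)))
    = of_nat (card (x1 - B)) * f (card A) + of_nat (card (\<Omega> - x1 - A)) * f (Suc (card A))"
proof -
  have split: "\<Omega> - (A \<union> B) = (x1 - B) \<union> (\<Omega> - x1 - A)" "(x1 - B) \<inter> (\<Omega> - x1 - A) = {}"
    using assms by blast+
  have in_x1: "insert z (A \<union> B) - x1 = A" if "z \<in> x1 - B" for z
    using that assms by blast
  have outside_x1: "card (insert z (A \<union> B) - x1) = Suc (card A)" if "z \<in> \<Omega> - x1 - A" for z
  proof -
    have "insert z (A \<union> B) - x1 = insert z A"
      using that assms by blast
    moreover have "finite A"
      using finite_subset[OF assms(3)] fin by simp
    ultimately show ?thesis
      using that by simp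
  qed
  have "(\<Sum>z\<in>\<Omega> - (A \<union> B). f (card (insert z (A \<union> B) - x1)))
      = (\<Sum>z\<in>x1 - B. f (card (insert z (A \<union> B) - x1)))
        + (\<Sum>z\<in>\<Omega> - x1 - A. f (card (insert z (A \<union> B) - x1)))"
    unfolding split(1) using fin assms(2) split(2) by (intro sum.union_disjoint) (auto intro: finite_subset)
  also have "\<dots> = (\<Sum>z\<in>x1 - B. f (card A)) + (\<Sum>z\<in>\<Omega> - x1 - A. f (Suc (card A)))"
    using in_x1 outside_x1 by (intro arg_cong2[where f = "(+)"] sum.cong) simp_all
  finally show ?thesis
    by simp
qed

lemma kernel_recurrence:
  assumes fin: "finite \<Omega>" and n: "card \<Omega> = n" and r: "r \<le> n" "s \<le> r" "s \<le> n - r"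
    and \<Lambda>: "is_Lambda \<Omega> s r s \<Lambda>" and lam: "is_kernel \<Omega> r s \<Lambda> lam" and j: "j < s"
  shows "(of_nat (r - s + 1) + of_nat j) * lam j + (of_nat (n - r) - of_nat j) * lam (Suc j) = 0"
proof -
  obtain x1 where x1: "x1 \<subseteq> \<Omega>" "card x1 = r"
    using obtain_subset_with_card_n r n by metis
  define \<delta> where "\<delta> = (\<lambda>x. if x = x1 then (1::complex) else 0)"
  have "\<delta> \<in> L2 \<Omega>"
    unfolding \<delta>_def L2_def using x1 by auto
  then have "\<Lambda> \<delta> \<in> L2comp \<Omega> s s"
    using is_Lambda_in_L2comp[OF fin r(2) _ \<Lambda>] r n by simp
  then have \<Lambda>\<delta>: "\<Lambda> \<delta> \<in> specht2 \<Omega> s"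
    using L2comp_self_eq_specht2[OF fin] r n by simp
  have fx1: "finite x1"
    using x1 fin finite_subset by blast
  have "j \<le> card (\<Omega> - x1)"
    using x1 fin n r j by (simp add: card_Diff_subset fx1)
  then obtain A where A: "A \<subseteq> \<Omega> - x1" "card A = j"
    by (rule obtain_subset_with_card_n)
  have "s - 1 - j \<le> card x1"
    using x1 r by simp
  then obtain B where B: "B \<subseteq> x1" "card B = s - 1 - j"
    by (rule obtain_subset_with_card_n)
  have fA: "finite A" and fB: "finite B"
    using finite_subset[OF A(1)] finite_subset[OF B(1) fx1] fin by simp_all
  have y: "A \<union> B \<subseteq> \<Omega>" "card (A \<union> B) = s - 1"
    using A B x1 card_Un_disjoint[OF fA fB] j by auto
  have "(\<Sum>z\<in>\<Omega> - (A \<union> B). \<Lambda> \<delta> (insert z (A \<union> B))) = 0"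
    using specht2_sum_insert_eq_0[OF fin _ \<Lambda>\<delta> y] j by simp
  moreover have "\<Lambda> \<delta> (insert z (A \<union> B)) = lam (card (insert z (A \<union> B) - x1))" if "z \<in> \<Omega> - (A \<union> B)" for z
    unfolding \<delta>_def
    by (rule is_kernel_indicator[OF lam fin x1]) (use that y fA fB j in \<open>auto simp: card_insert_if\<close>)
  ultimately have "of_nat (card (x1 - B)) * lam j + of_nat (card (\<Omega> - x1 - A)) * lam (Suc j) = 0"
    using sum_card_insert_diff[OF fin x1(1) A(1) B(1), of lam] A(2) by simp
  moreover have "card (x1 - B) = r - s + 1 + j" "card (\<Omega> - x1 - A) = n - r - j"
    using x1 A B fin fx1 fA fB n r j by (simp_all add: card_Diff_subset)
  ultimately show ?thesis
    using j r by (simp add: of_nat_diff algebra_simps)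
qed

lemma falling_Suc: "falling a (Suc k) = falling a k * (a - of_nat k)"
  by (simp add: falling_def)

lemma falling_of_nat_nonzero: "k \<le> m \<Longrightarrow> falling (of_nat m) k \<noteq> 0"
  unfolding falling_def by auto

lemma recurrence_closed_form:
  fixes l :: "nat \<Rightarrow> complex"
  assumes rec: "\<And>j. j < s \<Longrightarrow> (\<alpha> + of_nat j) * l j + (of_nat m - of_nat j) * l (Suc j) = 0"
    and "s \<le> m" "k \<le> s"
  shows "l k = (-1) ^ k * pochhammer \<alpha> k / falling (of_nat m) k * l 0"
  using assms(3)
proof (induction k)
  case 0
  then show ?case
    by (simp add: falling_def)
next
  case (Suc k)
  then have k: "k < s" "k < m"
    using assms(2) by simp_all
  have "(of_nat m - of_nat k :: complex) \<noteq> 0"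
    using k(2) by simp
  moreover have "falling (of_nat m) k \<noteq> 0"
    using falling_of_nat_nonzero k(2) by simp
  moreover have "l (Suc k) = - (\<alpha> + of_nat k) / (of_nat m - of_nat k) * l k"
    using rec[OF k(1)] calculation(1) by (simp add: field_simps add_eq_0_iff)
  ultimately show ?case
    using Suc.IH k by (simp add: falling_Suc pochhammer_Suc field_simps)
qed

theorem mainTheorem2:
  fixes \<Omega> :: "'a set" and n r s :: nat
    and \<Lambda> :: "'a fn \<Rightarrow> 'a fn" and lam :: "nat \<Rightarrow> complex"
  assumes "finite \<Omega>" and "card \<Omega> = n" and "n \<ge> 1"
    and "r \<le> n" and "s \<le> min r (n - r)"
    and "is_Lambda \<Omega> s r s \<Lambda>"
    and "is_kernel \<Omega> r s \<Lambda> lam"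
  shows "\<forall>k\<le>s. lam k = (-1) ^ k * pochhammer (of_nat (r - s + 1)) k
                      / falling (of_nat (n - r)) k * lam 0"
proof (intro allI impI)
  fix k assume "k \<le> s"
  have "s \<le> r" "s \<le> n - r"
    using assms(5) by simp_all
  then show "lam k = (-1) ^ k * pochhammer (of_nat (r - s + 1)) k / falling (of_nat (n - r)) k * lam 0"
    using recurrence_closed_form[OF kernel_recurrence[OF assms(1,2,4) _ _ assms(6,7)] _ \<open>k \<le> s\<close>]
    by blast
qed

end
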